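(* Consider the Markov process described in the context with $K=1$, satisfying Assumption (A) and the ergodicity condition (E), and let $p$ be its equilibrium distribution. For each $x\in\{-1,1\}^c$ let $\beta_{0,x}$ be the root in $(0,1)$ of equation $(\mathrm E_x)$, and for $i=1,\dots,c$ let $\beta_{i,x}=\dfrac{F_i(\beta_{0,x})+x_iR_i(\beta_{0,x})}{2D_i(\beta_{0,x})}$. Then there are real constants $\alpha_x$, $x\in\{-1,1\}^c$ (determined by the equilibrium equations for the states of $V$ and the states $\mathbf n\in W$ with $n_0<K$, and the normalization condition), such that \[p(\mathbf n)=\sum_{x\in\{-1,1\}^c}\alpha_x\,\beta_{0,x}^{n_0}\beta_{1,x}^{n_1}\cdots\beta_{c,x}^{n_c},\qquad \mathbf n\in W.\]
   Context: Fix integers $c\ge 1$ and $K\ge1$ (in the claim $K=1$). Consider an irreducible continuous-time Markov process on $V\cup W$, where $V$ is finite and $W=\{\mathbf n=(n_0,\dots,n_c): n_0\in\{0,1,\dots\},\ n_i\in\{0,1\}\}$. For each $i\in\{1,\dots,c\}$ and integer $k\le K$ there are nonnegative rates $a_{k,i},b_{k,i},c_{k,i},d_{k,i}$. From $\mathbf n\in W$, for each $i$ and $k\in\{-n_0,\dots,K\}$, the process jumps (changing only coordinates $0$ and $i$) from $(n_0,n_i)=(n_0,0)$ to $(n_0+k,1)$ at rate $a_{k,i}$ and to $(n_0+k,0)$ at rate $b_{k,i}$, and from $(n_0,1)$ to $(n_0+k,1)$ at rate $c_{k,i}$ and to $(n_0+k,0)$ at rate $d_{k,i}$; from $\mathbf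 n$ it jumps into $V$ with total rate $\sum_i\sum_{k\le -n_0-1}((1-n_i)(a_{k,i}+b_{k,i})+n_i(c_{k,i}+d_{k,i}))$; no other transitions leave $W$, and from $V$ no transitions go to states with $n_0\ge K$. Let $A_i(z)=\sum_{k=-\infty}^K a_{k,i}z^{K-k}$ and similarly $B_i,C_i,D_i$ with $b,c,d$. Assumption (A): for each $i$: (i) $A_i(1),B_i(1),C_i(1),D_i(1)<\infty$; (ii) $A_i(1),D_i(1)>0$; (iii) $A_i'(1),B_i'(1),C_i'(1),D_i'(1)<\infty$; (iv) $a_{K,i}=0$ or $d_{K,i}=0$; (v) $b_{K,i}=c_{K,i}\ne0$. Ergodicity condition (E): $0<\sum_{i=1}^c\frac{1}{A_i(1)+D_i(1)}\bigl(D_i(1)(A_i'(1)-KA_i(1)+B_i'(1)-KB_i(1))+A_i(1)(C_i'(1)-KC_i(1)+D_i'(1)-KD_i(1))\bigr)$. Let $F_i(z)=z^K(A_i(1)+B_i(1)-C_i(1)-D_i(1))-B_i(z)+C_i(z)$. For real $\beta_0\in[0,1]$ let $R_i(\beta_0)=\sqrt{F_i(\beta_0)^2+4A_i(\beta_0)D_i(\beta_0)}$ (nonnegative square root). For $x\in\{-1,1\}^c$, equation $(\mathrm E_x)$ in the unknown $\beta_0$ is \[0=\sum_{i=1}^c\Bigl(x_iR_i(\beta_0)+B_i(\beta_0)+C_i(\beta_0)-\beta_0^K\bigl(A_i(1)+B_i(1)+C_i(1)+D_i(1)\bigr)\Bigr).\] (When $K=1$, each such equation has exactly one root in $(0,1)$.)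 *)

theory Defs
  imports "HOL-Analysis.Analysis"
begin

text \<open>Rates are functions r :: int => nat => real, r k i = rate r_{k,i} (meaningful for k <= K,
  1 <= i <= c).  States of W are functions n :: nat => nat with n 0 = n_0, n i in {0,1} for
  1 <= i <= c and n i = 0 for i > c.\<close>

definition Wset :: "nat \<Rightarrow> (nat \<Rightarrow> nat) set" where
  "Wset c = {n. (\<forall>i\<in>{1..c}. n i \<le> 1) \<and> (\<forall>i>c. n i = 0)}"

definition state_space :: "'v set \<Rightarrow> nat \<Rightarrow> ('v + (nat \<Rightarrow> nat)) set" where
  "state_space V c = Inl ` V \<union> Inr ` Wset c"

definition sign_vectors :: "nat \<Rightarrow> (nat \<Rightarrow> real) set" where
  "sign_vectors c = {x. (\<forall>i\<in>{1..c}. x i = 1 \<or> x i = -1) \<and> (\<forall>i. i \<notin> {1..c} \<longrightarrow> x i = 0)}"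

text \<open>Generating function R_i(z) = sum_{k <= K} r_{k,i} z^(K-k), and its derivative at 1.\<close>
definition genf :: "nat \<Rightarrow> (int \<Rightarrow> nat \<Rightarrow> real) \<Rightarrow> nat \<Rightarrow> real \<Rightarrow> real" where
  "genf K r i z = (\<Sum>j. r (int K - int j) i * z ^ j)"

definition genf_deriv1 :: "nat \<Rightarrow> (int \<Rightarrow> nat \<Rightarrow> real) \<Rightarrow> nat \<Rightarrow> real" where
  "genf_deriv1 K r i = (\<Sum>j. real j * r (int K - int j) i)"

text \<open>Rate of the individual jump of server i with displacement k, from n_i = u to n_i = v.\<close>
definition jump_rate ::
  "(int \<Rightarrow> nat \<Rightarrow> real) \<Rightarrow> (int \<Rightarrow> nat \<Rightarrow> real) \<Rightarrow> (int \<Rightarrow> nat \<Rightarrow> real) \<Rightarrow> (int \<Rightarrow> nat \<Rightarrow> real)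
     \<Rightarrow> nat \<Rightarrow> int \<Rightarrow> nat \<Rightarrow> nat \<Rightarrow> real" where
  "jump_rate a b cr d i k u v =
     (if u = 0 then (if v = 1 then a k i else b k i) else (if v = 1 then cr k i else d k i))"

definition qW ::
  "nat \<Rightarrow> nat \<Rightarrow> (int \<Rightarrow> nat \<Rightarrow> real) \<Rightarrow> (int \<Rightarrow> nat \<Rightarrow> real) \<Rightarrow> (int \<Rightarrow> nat \<Rightarrow> real)
     \<Rightarrow> (int \<Rightarrow> nat \<Rightarrow> real) \<Rightarrow> (nat \<Rightarrow> nat) \<Rightarrow> (nat \<Rightarrow> nat) \<Rightarrow> real" where
  "qW K c a b cr d n m =
     (\<Sum>i\<in>{1..c}. \<Sum>k\<in>{- int (n 0)..int K}. \<Sum>v\<in>{0,1::nat}.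
        (if m = n(0 := nat (int (n 0) + k), i := v) then jump_rate a b cr d i k (n i) v else 0))"

text \<open>Total rate from n in W into V:
  sum_i sum_{k <= -n_0 - 1} ((1-n_i)(a+b) + n_i(c+d)), with k = -n_0 - 1 - j.\<close>
definition exit_rate ::
  "nat \<Rightarrow> (int \<Rightarrow> nat \<Rightarrow> real) \<Rightarrow> (int \<Rightarrow> nat \<Rightarrow> real) \<Rightarrow> (int \<Rightarrow> nat \<Rightarrow> real)
     \<Rightarrow> (int \<Rightarrow> nat \<Rightarrow> real) \<Rightarrow> (nat \<Rightarrow> nat) \<Rightarrow> real" where
  "exit_rate c a b cr d n =
     (\<Sum>i\<in>{1..c}. \<Sum>j. (let k = - int (n 0) - 1 - int j in
        (1 - real (n i)) * (a k i + b k i) + real (n i) * (cr k i + d k i)))"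

definition irreducible_ctmc :: "'s set \<Rightarrow> ('s \<Rightarrow> 's \<Rightarrow> real) \<Rightarrow> bool" where
  "irreducible_ctmc S q \<longleftrightarrow>
     (\<forall>s\<in>S. \<forall>t\<in>S. (\<lambda>x y. x \<in> S \<and> y \<in> S \<and> x \<noteq> y \<and> q x y > 0)\<^sup>*\<^sup>* s t)"

definition equilibrium_dist :: "'s set \<Rightarrow> ('s \<Rightarrow> 's \<Rightarrow> real) \<Rightarrow> ('s \<Rightarrow> real) \<Rightarrow> bool" where
  "equilibrium_dist S q p \<longleftrightarrow>
     (\<forall>s\<in>S. p s \<ge> 0) \<and> (p has_sum 1) S \<and>
     (\<forall>s\<in>S. (q s) summable_on (S - {s}) \<and> (\<lambda>t. p t * q t s) summable_on (S - {s}) \<and>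
        p s * (\<Sum>\<^sub>\<infinity>t\<in>S - {s}. q s t) = (\<Sum>\<^sub>\<infinity>t\<in>S - {s}. p t * q t s))"

definition Ffun :: "nat \<Rightarrow> (int \<Rightarrow> nat \<Rightarrow> real) \<Rightarrow> (int \<Rightarrow> nat \<Rightarrow> real) \<Rightarrow> (int \<Rightarrow> nat \<Rightarrow> real)
     \<Rightarrow> (int \<Rightarrow> nat \<Rightarrow> real) \<Rightarrow> nat \<Rightarrow> real \<Rightarrow> real" where
  "Ffun K a b cr d i z = z ^ K * (genf K a i 1 + genf K b i 1 - genf K cr i 1 - genf K d i 1)
     - genf K b i z + genf K cr i z"

definition Rfun :: "nat \<Rightarrow> (int \<Rightarrow> nat \<Rightarrow> real) \<Rightarrow> (int \<Rightarrow> nat \<Rightarrow> real) \<Rightarrow> (int \<Rightarrow> nat \<Rightarrow> real)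
     \<Rightarrow> (int \<Rightarrow> nat \<Rightarrow> real) \<Rightarrow> nat \<Rightarrow> real \<Rightarrow> real" where
  "Rfun K a b cr d i z = sqrt ((Ffun K a b cr d i z)\<^sup>2 + 4 * genf K a i z * genf K d i z)"

definition Efun :: "nat \<Rightarrow> nat \<Rightarrow> (int \<Rightarrow> nat \<Rightarrow> real) \<Rightarrow> (int \<Rightarrow> nat \<Rightarrow> real) \<Rightarrow> (int \<Rightarrow> nat \<Rightarrow> real)
     \<Rightarrow> (int \<Rightarrow> nat \<Rightarrow> real) \<Rightarrow> (nat \<Rightarrow> real) \<Rightarrow> real \<Rightarrow> real" where
  "Efun K c a b cr d x z = (\<Sum>i\<in>{1..c}.
      x i * Rfun K a b cr d i z + genf K b i z + genf K cr i z
      - z ^ K * (genf K a i 1 + genf K b i 1 + genf K cr i 1 + genf K d i 1))"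

definition ergodic_cond :: "nat \<Rightarrow> nat \<Rightarrow> (int \<Rightarrow> nat \<Rightarrow> real) \<Rightarrow> (int \<Rightarrow> nat \<Rightarrow> real) \<Rightarrow> (int \<Rightarrow> nat \<Rightarrow> real)
     \<Rightarrow> (int \<Rightarrow> nat \<Rightarrow> real) \<Rightarrow> bool" where
  "ergodic_cond K c a b cr d \<longleftrightarrow>
     0 < (\<Sum>i\<in>{1..c}. 1 / (genf K a i 1 + genf K d i 1) *
        (genf K d i 1 * (genf_deriv1 K a i - real K * genf K a i 1 + genf_deriv1 K b i - real K * genf K b i 1)
       + genf K a i 1 * (genf_deriv1 K cr i - real K * genf K cr i 1 + genf_deriv1 K d i - real K * genf K d i 1)))"

definition assumption_A :: "nat \<Rightarrow> nat \<Rightarrow> (int \<Rightarrow> nat \<Rightarrow> real) \<Rightarrow> (int \<Rightarrow> nat \<Rightarrow> real) \<Rightarrow> (int \<Rightarrow> nat \<Rightarrow> real)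
     \<Rightarrow> (int \<Rightarrow> nat \<Rightarrow> real) \<Rightarrow> bool" where
  "assumption_A K c a b cr d \<longleftrightarrow> (\<forall>i\<in>{1..c}.
     (\<forall>k \<le> int K. a k i \<ge> 0 \<and> b k i \<ge> 0 \<and> cr k i \<ge> 0 \<and> d k i \<ge> 0) \<and>
     (\<forall>r\<in>{a, b, cr, d}. summable (\<lambda>j. r (int K - int j) i)) \<and>
     genf K a i 1 > 0 \<and> genf K d i 1 > 0 \<and>
     (\<forall>r\<in>{a, b, cr, d}. summable (\<lambda>j. real j * r (int K - int j) i)) \<and>
     (a (int K) i = 0 \<or> d (int K) i = 0) \<and>
     b (int K) i = cr (int K) i \<and> b (int K) i \<noteq> 0)"

definition model_process :: "nat \<Rightarrow> nat \<Rightarrow> 'v set \<Rightarrow> (int \<Rightarrow> nat \<Rightarrow> real) \<Rightarrow> (int \<Rightarrow> nat \<Rightarrow> real)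
     \<Rightarrow> (int \<Rightarrow> nat \<Rightarrow> real) \<Rightarrow> (int \<Rightarrow> nat \<Rightarrow> real)
     \<Rightarrow> ('v + (nat \<Rightarrow> nat) \<Rightarrow> 'v + (nat \<Rightarrow> nat) \<Rightarrow> real) \<Rightarrow> bool" where
  "model_process K c V a b cr d q \<longleftrightarrow>
     finite V \<and>
     (\<forall>s\<in>state_space V c. \<forall>t\<in>state_space V c. s \<noteq> t \<longrightarrow> q s t \<ge> 0) \<and>
     (\<forall>n\<in>Wset c. \<forall>m\<in>Wset c. n \<noteq> m \<longrightarrow> q (Inr n) (Inr m) = qW K c a b cr d n m) \<and>
     (\<forall>n\<in>Wset c. (\<Sum>v\<in>V. q (Inr n) (Inl v)) = exit_rate c a b cr d n) \<and>
     (\<forall>v\<in>V. \<forall>m\<in>Wset c. m 0 \<ge> K \<longrightarrow> q (Inl v) (Inr m) = 0) \<and>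
     irreducible_ctmc (state_space V c) q"

end

theory Submission
  imports Defs "HOL-Library.Function_Algebras"
begin

text \<open>
  For each sign vector \<open>x\<close>, the product form \<open>beta0 x ^ n 0 * (\<Prod>i. beta x i ^ n i)\<close> satisfies
  the global balance equations at every state with \<open>n 0 \<ge> 1\<close>, which no transition from \<open>V\<close>
  reaches.  Server by server the balance holds up to a defect, because \<open>beta x i\<close> is a root of
  \<open>D\<^sub>i \<beta>\<^sup>2 - F\<^sub>i \<beta> - A\<^sub>i = 0\<close>, and the defects add up to zero because \<open>beta0 x\<close> is a root
  of (E_x).  Conversely, a summable solution of these equations that vanishes on the boundary
  \<open>n 0 = 0\<close> vanishes everywhere: comparing the total in- and outflow of \<open>\<bar>e\<bar>\<close> shows that no
  transition leaves the support of \<open>e\<close>, whereas by irreducibility every state leads to the empty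
  state on the boundary.  Finally the \<open>2 ^ c\<close> product forms are linearly independent already on
  the \<open>2 ^ c\<close> boundary states, so some combination of them agrees with \<open>p\<close> on the boundary and
  hence on all of \<open>W\<close>.
\<close>

lemma has_sum_sum:
  fixes f :: "'i \<Rightarrow> 'a \<Rightarrow> 'b::topological_comm_monoid_add"
  assumes "finite I" "\<And>i. i \<in> I \<Longrightarrow> (f i has_sum s i) A"
  shows "((\<lambda>x. \<Sum>i\<in>I. f i x) has_sum (\<Sum>i\<in>I. s i)) A"
  using assms by (induction I rule: finite_induct) (auto intro!: has_sum_add)

lemma has_sum_diff:
  fixes f g :: "'a \<Rightarrow> real"
  assumes "(f has_sum s) A" "(g has_sum t) A"
  shows "((\<lambda>x. f x - g x) has_sum (s - t)) A"
  using has_sum_add[OF assms(1) has_sum_uminusI[OF assms(2)]] by simp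

lemma has_sum_remove:
  fixes f :: "'a \<Rightarrow> 'b::topological_ab_group_add"
  assumes "(f has_sum s) A" "x \<in> A"
  shows "(f has_sum (s - f x)) (A - {x})"
proof -
  have "(f has_sum f x) {x}" by (simp add: has_sum_finiteI)
  then show ?thesis using has_sum_Diff[OF assms(1)] assms(2) by blast
qed

lemma has_sum_point_mass:
  "((\<lambda>m. if m = t then (r::'b::topological_comm_monoid_add) else 0) has_sum (if t \<in> A then r else 0)) A"
  by (rule has_sum_cong_neutral[where T="A \<inter> {t}", THEN iffD2])
    (auto simp: Int_absorb1 intro: has_sum_finiteI)

lemma infsum_Inl_Inr:
  fixes f :: "'v + 'w \<Rightarrow> real"
  assumes "finite V" and "f summable_on (Inl ` V \<union> Inr ` A)"
  shows "(\<lambda>m. f (Inr m)) summable_on A"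
    and "(\<Sum>\<^sub>\<infinity>t\<in>Inl ` V \<union> Inr ` A. f t) = (\<Sum>v\<in>V. f (Inl v)) + (\<Sum>\<^sub>\<infinity>m\<in>A. f (Inr m))"
proof -
  have Inr_summable: "f summable_on Inr ` A"
    by (rule summable_on_subset[OF assms(2)]) auto
  then show "(\<lambda>m. f (Inr m)) summable_on A"
    by (subst (asm) summable_on_reindex) (auto simp: o_def)
  have "(\<Sum>\<^sub>\<infinity>t\<in>Inl ` V \<union> Inr ` A. f t) = (\<Sum>\<^sub>\<infinity>t\<in>Inl ` V. f t) + (\<Sum>\<^sub>\<infinity>t\<in>Inr ` A. f t)"
    using assms(1) Inr_summable by (intro infsum_Un_disjoint) auto
  also have "\<dots> = (\<Sum>v\<in>V. f (Inl v)) + (\<Sum>\<^sub>\<infinity>m\<in>A. f (Inr m))"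
    using assms(1) by (simp add: infsum_reindex sum.reindex o_def)
  finally show "(\<Sum>\<^sub>\<infinity>t\<in>Inl ` V \<union> Inr ` A. f t) = (\<Sum>v\<in>V. f (Inl v)) + (\<Sum>\<^sub>\<infinity>m\<in>A. f (Inr m))" .
qed

lemma genf_has_sum:
  fixes r :: "int \<Rightarrow> nat \<Rightarrow> real"
  assumes nonneg: "\<And>k. k \<le> int K \<Longrightarrow> 0 \<le> r k i" and summable: "summable (\<lambda>j. r (int K - int j) i)"
    and z: "0 \<le> z" "z \<le> 1"
  shows "((\<lambda>j. r (int K - int j) i * z ^ j) has_sum genf K r i z) UNIV"
proof -
  have "summable (\<lambda>j. r (int K - int j) i * z ^ j)"
    by (rule summable_comparison_test[OF _ summable])
      (use nonneg z in \<open>auto intro!: exI[of _ 0] mult_left_le simp: abs_mult power_le_one\<close>)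
  then have "(\<lambda>j. r (int K - int j) i * z ^ j) sums genf K r i z"
    by (simp add: genf_def summable_sums)
  then show ?thesis
    by (rule sums_nonneg_imp_has_sum) (use nonneg z in auto)
qed

lemma genf_nonneg:
  fixes r :: "int \<Rightarrow> nat \<Rightarrow> real"
  assumes "\<And>k. k \<le> int K \<Longrightarrow> 0 \<le> r k i" "summable (\<lambda>j. r (int K - int j) i)" "0 \<le> z" "z \<le> 1"
  shows "0 \<le> genf K r i z"
  by (rule has_sum_nonneg[OF genf_has_sum[where r=r and i=i, OF assms]]) (use assms in auto)

lemma genf_pos:
  fixes r :: "int \<Rightarrow> nat \<Rightarrow> real"
  assumes nonneg: "\<And>k. k \<le> int K \<Longrightarrow> 0 \<le> r k i" and summable: "summable (\<lambda>j. r (int K - int j) i)"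
    and pos: "0 < genf K r i 1" and z: "0 < z" "z \<le> 1"
  shows "0 < genf K r i z"
proof -
  obtain j where j: "0 < r (int K - int j) i"
  proof (rule ccontr)
    assume "\<not> thesis"
    then have "\<not> 0 < r (int K - int j) i" for j using that by blast
    then have "r (int K - int j) i = 0" for j
      using nonneg[of "int K - int j"] by (simp add: not_less antisym)
    then show False using pos by (simp add: genf_def)
  qed
  have "(\<Sum>j'\<in>{j}. r (int K - int j') i * z ^ j') \<le> genf K r i z"
    by (rule finite_sum_le_has_sum[OF genf_has_sum[where r=r and i=i, OF nonneg summable]]) (use z nonneg in auto)
  moreover have "0 < r (int K - int j) i * z ^ j" using j z by simp
  ultimately show ?thesis by simp
qed

lemma sum_prod_over_funs:
  fixes h :: "'i \<Rightarrow> 'b \<Rightarrow> 'c::comm_semiring_1"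
  assumes "finite I" "finite B"
  shows "(\<Sum>f\<in>{f. \<forall>j. (j \<in> I \<longrightarrow> f j \<in> B) \<and> (j \<notin> I \<longrightarrow> f j = d)}. \<Prod>i\<in>I. h i (f i))
     = (\<Prod>i\<in>I. \<Sum>k\<in>B. h i k)"
proof -
  have "(\<Prod>i\<in>I. \<Sum>k\<in>B. h i k) = (\<Sum>g\<in>PiE I (\<lambda>_. B). \<Prod>i\<in>I. h i (g i))"
    by (rule prod_sum_PiE) (use assms in auto)
  also have "\<dots> = (\<Sum>f\<in>{f. \<forall>j. (j \<in> I \<longrightarrow> f j \<in> B) \<and> (j \<notin> I \<longrightarrow> f j = d)}. \<Prod>i\<in>I. h i (f i))"
  proof (rule sum.reindex_bij_witness[where i="\<lambda>f. restrict f I" and j="\<lambda>g j. if j \<in> I then g j else d"])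
    fix g assume g: "g \<in> PiE I (\<lambda>_. B)"
    show "restrict (\<lambda>j. if j \<in> I then g j else d) I = g"
      using g by (auto simp: fun_eq_iff PiE_def extensional_def)
    show "(\<lambda>j. if j \<in> I then g j else d) \<in> {f. \<forall>j. (j \<in> I \<longrightarrow> f j \<in> B) \<and> (j \<notin> I \<longrightarrow> f j = d)}"
      using g by auto
    show "(\<Prod>i\<in>I. h i (if i \<in> I then g i else d)) = (\<Prod>i\<in>I. h i (g i))"
      by (intro prod.cong) auto
  qed (auto simp: fun_eq_iff)
  finally show ?thesis by simp
qed

lemma sum_eq_fibre_sum_if_other_fibres_zero:
  assumes "finite X" and "\<And>\<mu>. \<mu> \<noteq> \<nu> \<Longrightarrow> (\<Sum>x\<in>{x\<in>X. g x = \<mu>}. w x) = (0::'a::comm_monoid_add)"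
  shows "(\<Sum>x\<in>X. w x) = (\<Sum>x\<in>{x\<in>X. g x = \<nu>}. w x)"
proof -
  have "(\<Sum>x\<in>X. w x) = (\<Sum>\<mu>\<in>g ` X. \<Sum>x\<in>{x\<in>X. g x = \<mu>}. w x)"
    by (rule sum.image_gen[OF assms(1)])
  also have "\<dots> = (\<Sum>\<mu>\<in>g ` X \<inter> {\<nu>}. \<Sum>x\<in>{x\<in>X. g x = \<mu>}. w x)"
    using assms by (intro sum.mono_neutral_right) auto
  also have "\<dots> = (\<Sum>x\<in>{x\<in>X. g x = \<nu>}. w x)"
  proof (cases "\<nu> \<in> g ` X")
    case False
    then have "g ` X \<inter> {\<nu>} = {}" "{x\<in>X. g x = \<nu>} = {}" by auto
    then show ?thesis by (simp only: sum.empty)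
  qed simp
  finally show ?thesis .
qed

lemma fibre_sums_zero_if_power_sums_zero:
  fixes g w :: "'x \<Rightarrow> real"
  assumes "finite X" and "\<And>m::nat. (\<Sum>x\<in>X. w x * g x ^ m) = 0"
  shows "(\<Sum>x\<in>{x\<in>X. g x = \<mu>}. w x) = 0"
proof -
  have "(\<Sum>x\<in>{x\<in>X. g x = \<mu>}. w x) = 0"
    if "finite L" "g ` X \<subseteq> L" "finite X" "\<And>m::nat. (\<Sum>x\<in>X. w x * g x ^ m) = 0" for L X w \<mu>
    using that
  proof (induction L arbitrary: X w \<mu> rule: finite_induct)
    case empty
    then show ?case by simp
  next
    case (insert \<nu> L)
    \<comment> \<open>Multiplying the weights by \<open>g x - \<nu>\<close> kills the fibre over \<open>\<nu>\<close> and keeps the power sums zero.\<close>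
    define X' where "X' = {x\<in>X. g x \<noteq> \<nu>}"
    define w' where "w' = (\<lambda>x. w x * (g x - \<nu>))"
    have "(\<Sum>x\<in>X'. w' x * g x ^ m) = 0" for m :: nat
    proof -
      have "(\<Sum>x\<in>X'. w' x * g x ^ m) = (\<Sum>x\<in>X. w' x * g x ^ m)"
        unfolding X'_def w'_def by (rule sum.mono_neutral_left) (use insert.prems in auto)
      also have "\<dots> = (\<Sum>x\<in>X. w x * g x ^ Suc m) - \<nu> * (\<Sum>x\<in>X. w x * g x ^ m)"
        unfolding w'_def by (simp add: sum_distrib_left sum_subtractf[symmetric] algebra_simps)
      finally show ?thesis using insert.prems(3) by (simp del: power_Suc)
    qed
    then have IH: "(\<Sum>x\<in>{x\<in>X'. g x = \<mu>'}. w' x) = 0" for \<mu>'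
      using insert.IH[of X' w'] insert.prems unfolding X'_def by auto
    have other: "(\<Sum>x\<in>{x\<in>X. g x = \<mu>'}. w x) = 0" if "\<mu>' \<noteq> \<nu>" for \<mu>'
    proof -
      have "{x\<in>X'. g x = \<mu>'} = {x\<in>X. g x = \<mu>'}" unfolding X'_def using that by auto
      then have "(\<Sum>x\<in>{x\<in>X'. g x = \<mu>'}. w' x) = (\<mu>' - \<nu>) * (\<Sum>x\<in>{x\<in>X. g x = \<mu>'}. w x)"
        unfolding w'_def sum_distrib_left by (intro sum.cong) auto
      then show ?thesis using IH that by simp
    qed
    show ?case
    proof (cases "\<mu> = \<nu>")
      case True
      then show ?thesis
        using sum_eq_fibre_sum_if_other_fibres_zero[OF insert.prems(2) other] insert.prems(3)[of 0]
        by simp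
    qed (use other in simp)
  qed
  then show ?thesis using assms by blast
qed

lemma sum_fun_apply: "sum F A x = (\<Sum>a\<in>A. F a x)"
  by (induction A rule: infinite_finite_induct) (auto simp: plus_fun_def zero_fun_def)

context vector_space
begin

lemma span_subset_span_independent_card_eq:
  assumes "finite B" "independent A" "A \<subseteq> span B" "card A = card B"
  shows "span B \<subseteq> span A"
proof
  fix b assume b: "b \<in> span B"
  show "b \<in> span A"
  proof (rule ccontr)
    assume nb: "b \<notin> span A"
    have "finite A" "card (insert b A) \<le> card B"
      using independent_span_bound[OF assms(1) independent_insertI[OF nb assms(2)]] b assms(3) by auto
    moreover have "b \<notin> A" using nb span_base by blast
    ultimately show False using assms(4) by simp
  qed
qed

end

definition fun_scale :: "real \<Rightarrow> ('a \<Rightarrow> real) \<Rightarrow> 'a \<Rightarrow> real" where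
  "fun_scale r g x = r * g x"

interpretation real_fun: vector_space fun_scale
  by unfold_locales (auto simp: fun_scale_def fun_eq_iff algebra_simps plus_fun_def)

lemma real_fun_span_point_masses:
  fixes g :: "'a \<Rightarrow> real"
  assumes "finite Y" "\<And>y. y \<notin> Y \<Longrightarrow> g y = 0"
  shows "g \<in> real_fun.span ((\<lambda>y0 y. if y = y0 then 1 else 0) ` Y)"
proof -
  have "g = (\<Sum>y0\<in>Y. fun_scale (g y0) (\<lambda>y. if y = y0 then 1 else 0))"
  proof
    fix y
    have "(\<Sum>y0\<in>Y. fun_scale (g y0) (\<lambda>y. if y = y0 then 1 else 0)) y = (\<Sum>y0\<in>Y. if y = y0 then g y0 else 0)"
      unfolding sum_fun_apply fun_scale_def by (intro sum.cong) auto
    also have "\<dots> = g y" using sum.delta'[OF assms(1), of y g] assms(2) by (cases "y \<in> Y") auto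
    finally show "g y = (\<Sum>y0\<in>Y. fun_scale (g y0) (\<lambda>y. if y = y0 then 1 else 0)) y" by simp
  qed
  also have "\<dots> \<in> real_fun.span ((\<lambda>y0 y. if y = y0 then 1 else 0) ` Y)"
    by (intro real_fun.span_sum real_fun.span_scale real_fun.span_base) auto
  finally show ?thesis .
qed

lemma real_fun_independent_rows:
  fixes v :: "'x \<Rightarrow> 'y \<Rightarrow> real" and Y :: "'y set"
  defines "vY \<equiv> \<lambda>x y. if y \<in> Y then v x y else 0"
  assumes X: "finite X"
    and trivial_kernel: "\<And>\<alpha>. \<forall>y\<in>Y. (\<Sum>x\<in>X. \<alpha> x * v x y) = 0 \<Longrightarrow> \<forall>x\<in>X. \<alpha> x = 0"
  shows "inj_on vY X" and "real_fun.independent (vY ` X)"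
proof -
  show inj_row: "inj_on vY X"
  proof (rule inj_onI, rule ccontr)
    fix x1 x2 assume x: "x1 \<in> X" "x2 \<in> X" "vY x1 = vY x2" "x1 \<noteq> x2"
    define \<alpha> where "\<alpha> = (\<lambda>x. if x = x1 then 1 else if x = x2 then -1 else (0::real))"
    have "(\<Sum>x\<in>X. \<alpha> x * v x y) = 0" if y: "y \<in> Y" for y
    proof -
      have "(\<Sum>x\<in>X. \<alpha> x * v x y) = (\<Sum>x\<in>{x1, x2}. \<alpha> x * v x y)"
        by (rule sum.mono_neutral_right) (use X x in \<open>auto simp: \<alpha>_def\<close>)
      then show ?thesis using x(4) fun_cong[OF x(3), of y] y by (simp add: \<alpha>_def vY_def)
    qed
    then have "\<alpha> x1 = 0" using trivial_kernel x(1) by blast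
    then show False unfolding \<alpha>_def by simp
  qed
  show "real_fun.independent (vY ` X)"
  proof
    assume "real_fun.dependent (vY ` X)"
    then obtain u where u: "\<exists>a\<in>vY ` X. u a \<noteq> 0" "(\<Sum>a\<in>vY ` X. fun_scale (u a) a) = 0"
      using real_fun.dependent_finite[of "vY ` X"] X by blast
    have "(\<Sum>x\<in>X. u (vY x) * v x y) = 0" if "y \<in> Y" for y
    proof -
      have "0 = (\<Sum>a\<in>vY ` X. u a * a y)"
        using fun_cong[OF u(2), of y] by (simp add: sum_fun_apply fun_scale_def)
      also have "\<dots> = (\<Sum>x\<in>X. u (vY x) * vY x y)" by (rule sum.reindex[OF inj_row, unfolded o_def])
      finally show ?thesis using that by (simp add: vY_def)
    qed
    then have "\<forall>x\<in>X. u (vY x) = 0" by (intro trivial_kernel) blast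
    then show False using u(1) by blast
  qed
qed

lemma square_system_solvable:
  fixes v :: "'x \<Rightarrow> 'y \<Rightarrow> real" and f :: "'y \<Rightarrow> real"
  assumes X: "finite X" and Y: "finite Y" and card: "card X = card Y"
    and trivial_kernel: "\<And>\<alpha>. \<forall>y\<in>Y. (\<Sum>x\<in>X. \<alpha> x * v x y) = 0 \<Longrightarrow> \<forall>x\<in>X. \<alpha> x = 0"
  shows "\<exists>\<alpha>. \<forall>y\<in>Y. f y = (\<Sum>x\<in>X. \<alpha> x * v x y)"
proof -
  define vY where "vY = (\<lambda>x y. if y \<in> Y then v x y else 0)"
  define \<delta> :: "'y \<Rightarrow> 'y \<Rightarrow> real" where "\<delta> = (\<lambda>y0 y. if y = y0 then 1 else 0)"
  note rows = real_fun_independent_rows[where v=v and Y=Y, OF X trivial_kernel, folded vY_def]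
  have "inj_on \<delta> Y"
  proof (rule inj_onI)
    fix y1 y2 assume "\<delta> y1 = \<delta> y2"
    from fun_cong[OF this, of y1] show "y1 = y2" unfolding \<delta>_def by (auto split: if_splits)
  qed
  then have "card (vY ` X) = card (\<delta> ` Y)"
    using card_image[OF rows(1)] card by (simp add: card_image)
  then have "real_fun.span (\<delta> ` Y) \<subseteq> real_fun.span (vY ` X)"
    using Y rows(2) real_fun_span_point_masses[OF Y] unfolding \<delta>_def
    by (intro real_fun.span_subset_span_independent_card_eq) (auto simp: vY_def)
  then have "(\<lambda>y. if y \<in> Y then f y else 0) \<in> real_fun.span (vY ` X)"
    using real_fun_span_point_masses[OF Y] unfolding \<delta>_def by auto
  then obtain u where u: "(\<lambda>y. if y \<in> Y then f y else 0) = (\<Sum>a\<in>vY ` X. fun_scale (u a) a)"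
    using real_fun.span_finite[of "vY ` X"] X by auto
  show ?thesis
  proof (intro exI ballI)
    fix y assume "y \<in> Y"
    then show "f y = (\<Sum>x\<in>X. u (vY x) * v x y)"
      using fun_cong[OF u, of y] rows(1) by (simp add: sum_fun_apply sum.reindex vY_def fun_scale_def)
  qed
qed

lemma quadratic_root:
  fixes A D F \<beta> s :: real
  assumes "0 < D" "0 \<le> A" "s = 1 \<or> s = -1"
    and "\<beta> = (F + s * sqrt (F\<^sup>2 + 4 * A * D)) / (2 * D)"
  shows "D * \<beta>\<^sup>2 - F * \<beta> - A = 0"
proof -
  have "2 * D * \<beta> - F = s * sqrt (F\<^sup>2 + 4 * A * D)" using assms(1,4) by (simp add: field_simps)
  then have "(2 * D * \<beta> - F)\<^sup>2 = F\<^sup>2 + 4 * A * D"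
    using assms(1-3) by (auto simp: power_mult_distrib)
  then have "4 * D * (D * \<beta>\<^sup>2 - F * \<beta> - A) = 0" by (simp add: algebra_simps power2_eq_square)
  then show ?thesis using assms(1) by simp
qed

section \<open>Conservation of mass\<close>

lemma has_sum_le_same_sum_imp_eq:
  fixes f g :: "'a \<Rightarrow> real"
  assumes "(f has_sum s) A" "(g has_sum s) A" "\<And>x. x \<in> A \<Longrightarrow> f x \<le> g x" "x \<in> A"
  shows "f x = g x"
proof -
  have "((\<lambda>x. g x - f x) has_sum 0) A" using has_sum_diff[OF assms(2,1)] by simp
  then have "g x - f x = 0" using nonneg_has_sum_le_0D[OF _ order.refl _ assms(4)] assms(3) by force
  then show ?thesis by simp
qed

lemma nonneg_has_sum_rows_cols:
  fixes G :: "'a \<times> 'a \<Rightarrow> real"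
  assumes nonneg: "\<And>m n. m \<in> W \<Longrightarrow> n \<in> W \<Longrightarrow> 0 \<le> G (m, n)"
    and rows: "\<And>m. m \<in> W \<Longrightarrow> ((\<lambda>n. G (m, n)) has_sum r m) W" and r: "(r has_sum s) W"
    and cols: "\<And>n. n \<in> W \<Longrightarrow> ((\<lambda>m. G (m, n)) has_sum k n) W"
  shows "(k has_sum s) W"
proof -
  have "G summable_on Sigma W (\<lambda>_. W)"
    by (rule summable_on_SigmaI[OF rows has_sum_imp_summable[OF r]]) (use nonneg in auto)
  then obtain total where total: "(G has_sum total) (Sigma W (\<lambda>_. W))"
    unfolding summable_on_def by blast
  have "total = s" using has_sum_Sigma'[OF total rows] r has_sum_unique by blast
  moreover have "((\<lambda>(n, m). G (m, n)) has_sum total) (Sigma W (\<lambda>_. W))"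
    using total has_sum_swap[of G W W total] by simp
  then have "(k has_sum total) W"
    by (rule has_sum_Sigma') (use cols in auto)
  ultimately show ?thesis by simp
qed

lemma total_inflow_eq_total_outflow:
  fixes u :: "'a \<Rightarrow> real" and Q :: "'a \<Rightarrow> 'a \<Rightarrow> real"
  assumes S: "S \<subseteq> W" and u_nonneg: "\<And>m. m \<in> W \<Longrightarrow> 0 \<le> u m" and Q_nonneg: "\<And>m n. 0 \<le> Q m n"
    and Q_summable: "\<And>m. m \<in> W \<Longrightarrow> Q m summable_on (S - {m})"
    and inflow_summable: "\<And>n. n \<in> S \<Longrightarrow> (\<lambda>m. u m * Q m n) summable_on (W - {n})"
    and outflow: "((\<lambda>m. u m * (\<Sum>\<^sub>\<infinity>n\<in>S - {m}. Q m n)) has_sum flow) W"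
  shows "((\<lambda>n. if n \<in> S then \<Sum>\<^sub>\<infinity>m\<in>W - {n}. u m * Q m n else 0) has_sum flow) W"
proof (rule nonneg_has_sum_rows_cols[OF _ _ outflow])
  define G where "G = (\<lambda>(m, n). if n \<in> S \<and> n \<noteq> m then u m * Q m n else 0)"
  show "0 \<le> G (m, n)" if "m \<in> W" for m n
    using that by (auto simp: G_def intro!: mult_nonneg_nonneg u_nonneg Q_nonneg)
  show "((\<lambda>n. G (m, n)) has_sum u m * (\<Sum>\<^sub>\<infinity>n\<in>S - {m}. Q m n)) W" if m: "m \<in> W" for m
  proof -
    have "((\<lambda>n. u m * Q m n) has_sum u m * (\<Sum>\<^sub>\<infinity>n\<in>S - {m}. Q m n)) (S - {m})"
      by (intro has_sum_cmult_right has_sum_infsum Q_summable m)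
    then show ?thesis
      by (rule has_sum_cong_neutral[THEN iffD1, rotated -1]) (use S in \<open>auto simp: G_def\<close>)
  qed
  show "((\<lambda>m. G (m, n)) has_sum (if n \<in> S then \<Sum>\<^sub>\<infinity>m\<in>W - {n}. u m * Q m n else 0)) W"
    if n: "n \<in> W" for n
  proof (cases "n \<in> S")
    case True
    then have "((\<lambda>m. u m * Q m n) has_sum (\<Sum>\<^sub>\<infinity>m\<in>W - {n}. u m * Q m n)) (W - {n})"
      by (simp add: has_sum_infsum inflow_summable)
    then show ?thesis
      using True by (subst has_sum_cong_neutral[where T="W - {n}"]) (auto simp: G_def)
  qed (simp add: G_def)
qed

lemma mass_conservation:
  fixes u out :: "'a \<Rightarrow> real" and Q :: "'a \<Rightarrow> 'a \<Rightarrow> real"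
  assumes S: "S \<subseteq> W"
    and u_summable: "u summable_on W" and u_nonneg: "\<And>m. m \<in> W \<Longrightarrow> 0 \<le> u m"
    and u_outside: "\<And>m. m \<in> W - S \<Longrightarrow> u m = 0"
    and Q_nonneg: "\<And>m n. 0 \<le> Q m n"
    and Q_summable: "\<And>m. m \<in> W \<Longrightarrow> Q m summable_on (W - {m})"
    and Q_out: "\<And>m. m \<in> W \<Longrightarrow> (\<Sum>\<^sub>\<infinity>n\<in>W - {m}. Q m n) \<le> out m"
    and out_bounded: "\<And>m. m \<in> W \<Longrightarrow> out m \<le> B"
    and inflow_summable: "\<And>n. n \<in> S \<Longrightarrow> (\<lambda>m. u m * Q m n) summable_on (W - {n})"
    and inflow_ge: "\<And>n. n \<in> S \<Longrightarrow> u n * out n \<le> (\<Sum>\<^sub>\<infinity>m\<in>W - {n}. u m * Q m n)"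
  shows "\<And>m. m \<in> S \<Longrightarrow> u m \<noteq> 0 \<Longrightarrow> (\<Sum>\<^sub>\<infinity>n\<in>S - {m}. Q m n) = out m"
    and "\<And>n. n \<in> S \<Longrightarrow> (\<Sum>\<^sub>\<infinity>m\<in>W - {n}. u m * Q m n) = u n * out n"
proof -
  \<comment> \<open>The total flow of mass into \<open>S\<close> is at most \<open>\<Sum>m. u m * out m\<close> (counted at its sources) and at
     least that much (counted at its targets), so all these inequalities are equalities.\<close>
  define out_S where "out_S m = (\<Sum>\<^sub>\<infinity>n\<in>S - {m}. Q m n)" for m
  define inflow where "inflow n = (if n \<in> S then \<Sum>\<^sub>\<infinity>m\<in>W - {n}. u m * Q m n else 0)" for n
  have Q_summable_S: "Q m summable_on (S - {m})" if "m \<in> W" for m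
    by (rule summable_on_subset[OF Q_summable[OF that]]) (use S in auto)
  have out_S: "0 \<le> out_S m" "out_S m \<le> out m" if m: "m \<in> W" for m
  proof -
    show "0 \<le> out_S m" unfolding out_S_def by (rule infsum_nonneg) (rule Q_nonneg)
    have "out_S m \<le> (\<Sum>\<^sub>\<infinity>n\<in>W - {m}. Q m n)"
      unfolding out_S_def
      by (rule infsum_mono_neutral) (use Q_summable_S[OF m] Q_summable[OF m] Q_nonneg S in auto)
    then show "out_S m \<le> out m" using Q_out[OF m] by simp
  qed
  have u_out: "(\<lambda>m. u m * out m) summable_on W"
  proof (rule summable_on_comparison_test[OF summable_on_cmult_right[OF u_summable, of B]])
    fix m assume m: "m \<in> W"
    have "0 \<le> out m" using out_S[OF m] by linarith
    then show "0 \<le> u m * out m" "u m * out m \<le> B * u m"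
      using u_nonneg[OF m] out_bounded[OF m] by (simp_all add: mult.commute[of B] mult_left_mono)
  qed
  then obtain T where T: "((\<lambda>m. u m * out m) has_sum T) W"
    unfolding summable_on_def by blast
  have "(\<lambda>m. u m * out_S m) summable_on W"
    by (rule summable_on_comparison_test[OF u_out]) (use out_S u_nonneg in \<open>auto simp: mult_left_mono\<close>)
  then obtain total where total: "((\<lambda>m. u m * out_S m) has_sum total) W"
    unfolding summable_on_def by blast
  have inflow_total: "(inflow has_sum total) W"
    unfolding inflow_def
    by (rule total_inflow_eq_total_outflow[OF S u_nonneg Q_nonneg Q_summable_S inflow_summable
          total[unfolded out_S_def]])
  have inflow_ge': "u n * out n \<le> inflow n" if "n \<in> W" for n
    using that inflow_ge u_outside[of n] by (cases "n \<in> S") (auto simp: inflow_def)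
  have "total \<le> T"
    by (rule has_sum_mono[OF total T]) (use out_S u_nonneg in \<open>auto simp: mult_left_mono\<close>)
  moreover have "T \<le> total"
    by (rule has_sum_mono[OF T inflow_total]) (use inflow_ge' in auto)
  ultimately have T_total: "((\<lambda>m. u m * out m) has_sum total) W" using T by simp
  show "(\<Sum>\<^sub>\<infinity>n\<in>S - {m}. Q m n) = out m" if "m \<in> S" "u m \<noteq> 0" for m
    using has_sum_le_same_sum_imp_eq[OF total T_total, of m] out_S u_nonneg that S
    unfolding out_S_def by (auto simp: mult_left_mono)
  show "(\<Sum>\<^sub>\<infinity>m\<in>W - {n}. u m * Q m n) = u n * out n" if "n \<in> S" for n
    using has_sum_le_same_sum_imp_eq[OF T_total inflow_total inflow_ge', of n] that S
    unfolding inflow_def by auto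
qed

definition boundary_states :: "nat \<Rightarrow> (nat \<Rightarrow> nat) set" where
  "boundary_states c = {n \<in> Wset c. n 0 = 0}"

lemma Wset_le_1: "n \<in> Wset c \<Longrightarrow> i \<in> {1..c} \<Longrightarrow> n i \<le> 1"
  unfolding Wset_def by auto

lemma Wset_update: "n \<in> Wset c \<Longrightarrow> i \<in> {1..c} \<Longrightarrow> v \<le> 1 \<Longrightarrow> n(0 := l, i := v) \<in> Wset c"
  unfolding Wset_def by auto

lemma boundary_states_eq:
  "boundary_states c = {f. \<forall>j. (j \<in> {1..c} \<longrightarrow> f j \<in> {0,1}) \<and> (j \<notin> {1..c} \<longrightarrow> f j = 0)}"
proof (intro set_eqI iffI)
  fix f assume "f \<in> boundary_states c"
  then have "\<forall>i\<in>{1..c}. f i \<le> 1" "\<forall>i. i \<notin> {1..c} \<longrightarrow> f i = 0"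
    unfolding boundary_states_def Wset_def by (auto simp: not_le)
  then show "f \<in> {f. \<forall>j. (j \<in> {1..c} \<longrightarrow> f j \<in> {0,1}) \<and> (j \<notin> {1..c} \<longrightarrow> f j = 0)}"
    by (auto simp: le_Suc_eq)
qed (auto simp: boundary_states_def Wset_def)

lemma sign_vectors_eq:
  "sign_vectors c = {f. \<forall>j. (j \<in> {1..c} \<longrightarrow> f j \<in> {1,-1}) \<and> (j \<notin> {1..c} \<longrightarrow> f j = 0)}"
  unfolding sign_vectors_def by auto

lemma finite_boundary_states: "finite (boundary_states c)"
  unfolding boundary_states_eq by (rule finite_set_of_finite_funs) auto

lemma finite_sign_vectors: "finite (sign_vectors c)"
  unfolding sign_vectors_eq by (rule finite_set_of_finite_funs) auto

lemma sum_boundary_states_prod: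
  fixes h :: "nat \<Rightarrow> nat \<Rightarrow> 'a::comm_semiring_1"
  shows "(\<Sum>f\<in>boundary_states c. \<Prod>i\<in>{1..c}. h i (f i)) = (\<Prod>i\<in>{1..c}. h i 0 + h i 1)"
  unfolding boundary_states_eq by (subst sum_prod_over_funs) auto

lemma card_boundary_states: "card (boundary_states c) = 2 ^ c"
  using sum_boundary_states_prod[of "\<lambda>_ _. 1::nat" c] by (simp add: numeral_2_eq_2)

lemma card_sign_vectors: "card (sign_vectors c) = 2 ^ c"
  using sum_prod_over_funs[of "{1..c}" "{1, -1::real}" "\<lambda>_ _. 1::nat" 0]
  unfolding sign_vectors_eq[symmetric] by (simp add: numeral_2_eq_2)

lemma sign_vector_values: "x \<in> sign_vectors c \<Longrightarrow> i \<in> {1..c} \<Longrightarrow> x i = 1 \<or> x i = -1"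
  unfolding sign_vectors_def by auto

lemma Wset_eq_UN_levels: "Wset c = (\<Union>ph\<in>boundary_states c. range (\<lambda>l. ph(0 := l)))"
proof (intro equalityI subsetI)
  fix n assume "n \<in> Wset c"
  then have "n(0 := 0) \<in> boundary_states c" "n = (n(0 := 0))(0 := n 0)"
    unfolding boundary_states_def Wset_def by auto
  then show "n \<in> (\<Union>ph\<in>boundary_states c. range (\<lambda>l. ph(0 := l)))" by blast
qed (auto simp: boundary_states_def Wset_def)

lemma prod_indicator_sign_vectors:
  assumes "x \<in> sign_vectors c" "y \<in> sign_vectors c"
  shows "(\<Prod>i\<in>{1..c}. if x i = y i then 1 else 0) = (if x = y then (1::real) else 0)"
proof (cases "x = y")
  case False
  then obtain j where j: "x j \<noteq> y j" by (auto simp: fun_eq_iff)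
  have "j \<in> {1..c}"
  proof (rule ccontr)
    assume "j \<notin> {1..c}"
    then have "x j = 0" "y j = 0" using assms unfolding sign_vectors_def by blast+
    with j show False by simp
  qed
  then have "(\<Prod>i\<in>{1..c}. if x i = y i then 1 else 0) = (0::real)"
    using j by (intro prod_zero) auto
  then show ?thesis using False by simp
qed simp

text \<open>In coordinate \<open>i\<close>, the linear functional sending \<open>1\<close> to \<open>sign_dual t y i 0\<close> and \<open>t\<close> to
  \<open>sign_dual t y i 1\<close> is \<open>1\<close> at \<open>t i (y i)\<close> and \<open>0\<close> at \<open>t i (- y i)\<close>; the product of these
  functionals over all coordinates picks out the sign vector \<open>y\<close>.\<close>

definition sign_dual :: "(nat \<Rightarrow> real \<Rightarrow> real) \<Rightarrow> (nat \<Rightarrow> real) \<Rightarrow> nat \<Rightarrow> nat \<Rightarrow> real" where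
  "sign_dual t y i k = (if k = 0 then - y i * t i (- y i) else y i) / (t i 1 - t i (-1))"

lemma sign_dual_coordinate:
  assumes "t i 1 \<noteq> t i (-1)" "x i = 1 \<or> x i = -1" "y i = 1 \<or> y i = -1"
  shows "sign_dual t y i 0 + sign_dual t y i 1 * t i (x i) = (if x i = y i then 1 else 0)"
proof -
  have "sign_dual t y i 0 + sign_dual t y i 1 * t i (x i) = y i * (t i (x i) - t i (- y i)) / (t i 1 - t i (-1))"
    by (simp add: sign_dual_def add_divide_distrib[symmetric] algebra_simps)
  also have "y i * (t i (x i) - t i (- y i)) = (if x i = y i then t i 1 - t i (-1) else 0)"
    using assms(2,3) by auto
  finally show ?thesis using assms(1) by simp
qed

lemma sign_dual_pairing:
  assumes distinct: "\<And>i. i \<in> {1..c} \<Longrightarrow> t i 1 \<noteq> t i (-1)"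
    and x: "x \<in> sign_vectors c" and y: "y \<in> sign_vectors c"
  shows "(\<Sum>ph\<in>boundary_states c. \<Prod>i\<in>{1..c}. sign_dual t y i (ph i) * t i (x i) ^ ph i)
    = (if x = y then 1 else 0)"
proof -
  have "(\<Sum>ph\<in>boundary_states c. \<Prod>i\<in>{1..c}. sign_dual t y i (ph i) * t i (x i) ^ ph i)
      = (\<Prod>i\<in>{1..c}. sign_dual t y i 0 * t i (x i) ^ 0 + sign_dual t y i 1 * t i (x i) ^ 1)"
    by (rule sum_boundary_states_prod)
  also have "\<dots> = (\<Prod>i\<in>{1..c}. if x i = y i then 1 else 0)"
  proof (rule prod.cong)
    fix i assume "i \<in> {1..c}"
    then show "sign_dual t y i 0 * t i (x i) ^ 0 + sign_dual t y i 1 * t i (x i) ^ 1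
        = (if x i = y i then 1 else 0)"
      using sign_dual_coordinate[of t i x y] distinct sign_vector_values[OF x] sign_vector_values[OF y]
      by simp
  qed simp
  finally show ?thesis using prod_indicator_sign_vectors[OF x y] by simp
qed

lemma sign_monomials_independent:
  fixes t :: "nat \<Rightarrow> real \<Rightarrow> real" and \<alpha> :: "(nat \<Rightarrow> real) \<Rightarrow> real"
  assumes distinct: "\<And>i. i \<in> {1..c} \<Longrightarrow> t i 1 \<noteq> t i (-1)"
    and G: "G \<subseteq> sign_vectors c"
    and vanish: "\<And>ph. ph \<in> boundary_states c \<Longrightarrow> (\<Sum>x\<in>G. \<alpha> x * (\<Prod>i\<in>{1..c}. t i (x i) ^ ph i)) = 0"
    and y: "y \<in> G"
  shows "\<alpha> y = 0"
proof -
  let ?w = "\<lambda>ph. \<Prod>i\<in>{1..c}. sign_dual t y i (ph i)"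
  have "0 = (\<Sum>ph\<in>boundary_states c. ?w ph * (\<Sum>x\<in>G. \<alpha> x * (\<Prod>i\<in>{1..c}. t i (x i) ^ ph i)))"
    using vanish by simp
  also have "\<dots> = (\<Sum>ph\<in>boundary_states c. \<Sum>x\<in>G. \<alpha> x * (\<Prod>i\<in>{1..c}. sign_dual t y i (ph i) * t i (x i) ^ ph i))"
    by (simp add: sum_distrib_left prod.distrib mult.left_commute)
  also have "\<dots> = (\<Sum>x\<in>G. \<alpha> x * (\<Sum>ph\<in>boundary_states c. \<Prod>i\<in>{1..c}. sign_dual t y i (ph i) * t i (x i) ^ ph i))"
    by (subst sum.swap) (simp add: sum_distrib_left)
  also have "\<dots> = (\<Sum>x\<in>G. \<alpha> x * (if x = y then 1 else 0))"
  proof (rule sum.cong[OF refl])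
    fix x assume "x \<in> G"
    then have "(\<Sum>ph\<in>boundary_states c. \<Prod>i\<in>{1..c}. sign_dual t y i (ph i) * t i (x i) ^ ph i)
        = (if x = y then 1 else 0)"
      using sign_dual_pairing[of c t x y, OF distinct] G y by blast
    then show "\<alpha> x * (\<Sum>ph\<in>boundary_states c. \<Prod>i\<in>{1..c}. sign_dual t y i (ph i) * t i (x i) ^ ph i)
        = \<alpha> x * (if x = y then 1 else 0)" by (simp only:)
  qed
  also have "\<dots> = \<alpha> y"
    using finite_subset[OF G finite_sign_vectors] y by (simp add: if_distrib sum.delta cong: if_cong)
  finally show ?thesis by simp
qed

section \<open>The queueing model\<close>

locale queue_model =
  fixes c :: nat and V :: "'v set" and a b cr d :: "int \<Rightarrow> nat \<Rightarrow> real"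
    and q :: "'v + (nat \<Rightarrow> nat) \<Rightarrow> 'v + (nat \<Rightarrow> nat) \<Rightarrow> real"
  assumes model: "model_process 1 c V a b cr d q"
    and rates: "assumption_A 1 c a b cr d"
begin

text \<open>A constant rather than an abbreviation, so that the simplifier cannot rewrite the \<open>1\<close> inside.\<close>

definition Q :: "(nat \<Rightarrow> nat) \<Rightarrow> (nat \<Rightarrow> nat) \<Rightarrow> real" where
  "Q = qW 1 c a b cr d"

lemma finite_V: "finite V"
  and q_nonneg: "s \<in> state_space V c \<Longrightarrow> t \<in> state_space V c \<Longrightarrow> s \<noteq> t \<Longrightarrow> 0 \<le> q s t"
  and q_Inr_Inr: "n \<in> Wset c \<Longrightarrow> m \<in> Wset c \<Longrightarrow> n \<noteq> m \<Longrightarrow> q (Inr n) (Inr m) = Q n m"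
  and q_exit: "n \<in> Wset c \<Longrightarrow> (\<Sum>v\<in>V. q (Inr n) (Inl v)) = exit_rate c a b cr d n"
  and q_Inl_Inr: "v \<in> V \<Longrightarrow> m \<in> Wset c \<Longrightarrow> 1 \<le> m 0 \<Longrightarrow> q (Inl v) (Inr m) = 0"
  and q_irreducible: "irreducible_ctmc (state_space V c) q"
  using model unfolding model_process_def Q_def by auto

lemma rates_nonneg:
  assumes "i \<in> {1..c}" "k \<le> 1"
  shows "0 \<le> a k i" "0 \<le> b k i" "0 \<le> cr k i" "0 \<le> d k i"
  using rates assms unfolding assumption_A_def by auto

lemma rates_summable:
  assumes "i \<in> {1..c}"
  shows "summable (\<lambda>j. a (1 - int j) i)" "summable (\<lambda>j. b (1 - int j) i)"
    "summable (\<lambda>j. cr (1 - int j) i)" "summable (\<lambda>j. d (1 - int j) i)"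
  using rates assms unfolding assumption_A_def by auto

lemma genf_rates_nonneg:
  assumes "i \<in> {1..c}" "0 \<le> z" "z \<le> 1"
  shows "0 \<le> genf 1 a i z" "0 \<le> genf 1 b i z" "0 \<le> genf 1 cr i z" "0 \<le> genf 1 d i z"
  using genf_nonneg[where K=1 and r=a and i=i] genf_nonneg[where K=1 and r=b and i=i]
    genf_nonneg[where K=1 and r=cr and i=i] genf_nonneg[where K=1 and r=d and i=i]
    rates_nonneg[OF assms(1)] rates_summable[OF assms(1)] assms(2,3) by auto

lemma genf_a_d_pos:
  assumes "i \<in> {1..c}" "0 < z" "z \<le> 1"
  shows "0 < genf 1 a i z" "0 < genf 1 d i z"
  using genf_pos[where K=1 and r=a and i=i] genf_pos[where K=1 and r=d and i=i]
    rates_nonneg[OF assms(1)] rates_summable[OF assms(1)] rates assms(1-3)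
  unfolding assumption_A_def by auto

lemma Rfun_pos: "i \<in> {1..c} \<Longrightarrow> 0 < z \<Longrightarrow> z \<le> 1 \<Longrightarrow> 0 < Rfun 1 a b cr d i z"
  using genf_a_d_pos[of i z] unfolding Rfun_def by (simp add: add_nonneg_pos)

lemma jump_rate_nonneg: "i \<in> {1..c} \<Longrightarrow> k \<le> 1 \<Longrightarrow> 0 \<le> jump_rate a b cr d i k u v"
  unfolding jump_rate_def using rates_nonneg by auto

lemma jump_rate_summable: "i \<in> {1..c} \<Longrightarrow> summable (\<lambda>j. jump_rate a b cr d i (1 - int j) u v)"
  unfolding jump_rate_def using rates_summable by (cases "u = 0"; cases "v = 1") auto

lemma genf_jump_rate:
  "genf 1 (\<lambda>k l. jump_rate a b cr d l k u v) i z =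
     (if u = 0 then (if v = 1 then genf 1 a i z else genf 1 b i z)
      else (if v = 1 then genf 1 cr i z else genf 1 d i z))"
  unfolding genf_def jump_rate_def by simp

lemma Q_nonneg: "0 \<le> Q n m"
  unfolding Q_def qW_def using jump_rate_nonneg by (intro sum_nonneg) auto

text \<open>Jumps of size 0 that leave the server state unchanged (rates \<open>b 0 i\<close>, \<open>cr 0 i\<close>) are self-loops,
  which the generator ignores; \<open>self_rate\<close> removes them from the total jump rate.\<close>

definition jump_total :: "nat \<Rightarrow> int \<Rightarrow> nat \<Rightarrow> real" where
  "jump_total i k u = (if u = 0 then a k i + b k i else cr k i + d k i)"

definition total_rate :: "nat \<Rightarrow> nat \<Rightarrow> real" where
  "total_rate i u = (if u = 0 then genf 1 a i 1 + genf 1 b i 1 else genf 1 cr i 1 + genf 1 d i 1)"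

definition self_rate :: "nat \<Rightarrow> nat \<Rightarrow> real" where
  "self_rate i u = (if u = 0 then b 0 i else cr 0 i)"

definition departure_rate :: "(nat \<Rightarrow> nat) \<Rightarrow> real" where
  "departure_rate n = (\<Sum>i\<in>{1..c}. total_rate i (n i) - self_rate i (n i))"

lemma total_rate_nonneg: "i \<in> {1..c} \<Longrightarrow> 0 \<le> total_rate i u"
  unfolding total_rate_def using genf_rates_nonneg[of i 1] by auto

lemma total_rate_split:
  assumes i: "i \<in> {1..c}" and u: "u \<le> 1"
  shows "total_rate i u = (\<Sum>j. jump_total i (- int l - 1 - int j) u) + (\<Sum>k\<in>{- int l..1}. jump_total i k u)"
proof -
  have summable: "summable (\<lambda>j. jump_total i (1 - int j) u)"
    unfolding jump_total_def using rates_summable[OF i] by (cases "u = 0") (auto intro: summable_add)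
  have "total_rate i u = (\<Sum>j. jump_total i (1 - int j) u)"
    unfolding jump_total_def total_rate_def genf_def using rates_summable[OF i]
    by (auto simp: suminf_add)
  also have "\<dots> = (\<Sum>j. jump_total i (1 - int (j + (l + 2))) u) + (\<Sum>j<l+2. jump_total i (1 - int j) u)"
    by (rule suminf_split_initial_segment[OF summable])
  also have "(\<lambda>j. jump_total i (1 - int (j + (l + 2))) u) = (\<lambda>j. jump_total i (- int l - 1 - int j) u)"
    by (intro ext arg_cong[where f="\<lambda>k. jump_total i k u"]) simp
  also have "(\<Sum>j<l+2. jump_total i (1 - int j) u) = (\<Sum>k\<in>{- int l..1}. jump_total i k u)"
    by (rule sum.reindex_bij_witness[where i="\<lambda>k. nat (1 - k)" and j="\<lambda>j. 1 - int j"]) auto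
  finally show ?thesis .
qed

lemma exit_rate_eq:
  assumes "n \<in> Wset c"
  shows "exit_rate c a b cr d n = (\<Sum>i\<in>{1..c}. \<Sum>j. jump_total i (- int (n 0) - 1 - int j) (n i))"
  unfolding exit_rate_def
proof (rule sum.cong[OF refl])
  fix i assume "i \<in> {1..c}"
  then have "n i = 0 \<or> n i = 1" using Wset_le_1[OF assms] by fastforce
  then show "(\<Sum>j. let k = - int (n 0) - 1 - int j in
          (1 - real (n i)) * (a k i + b k i) + real (n i) * (cr k i + d k i)) =
         (\<Sum>j. jump_total i (- int (n 0) - 1 - int j) (n i))"
    by (elim disjE) (simp_all add: jump_total_def Let_def)
qed

lemma exit_rate_nonneg: "n \<in> Wset c \<Longrightarrow> 0 \<le> exit_rate c a b cr d n"
proof -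
  assume n: "n \<in> Wset c"
  have "0 \<le> q (Inr n) (Inl v)" if "v \<in> V" for v
    using model that n unfolding model_process_def state_space_def by auto
  then show ?thesis using model n unfolding model_process_def by (metis sum_nonneg)
qed

lemma jump_target_eq_iff:
  assumes "i \<in> {1..c}" "- int (n 0) \<le> k"
  shows "n(0 := nat (int (n 0) + k), i := v) = n \<longleftrightarrow> k = 0 \<and> v = n i"
proof
  assume eq: "n(0 := nat (int (n 0) + k), i := v) = n"
  from fun_cong[OF eq, of 0] fun_cong[OF eq, of i] assms show "k = 0 \<and> v = n i" by auto
qed auto

lemma Q_row_has_sum:
  assumes n: "n \<in> Wset c"
  shows "(Q n has_sum (departure_rate n - exit_rate c a b cr d n)) (Wset c - {n})"
proof -
  let ?t = "\<lambda>i k v. n(0 := nat (int (n 0) + k), i := v)"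
  have "(Q n has_sum
     (\<Sum>i\<in>{1..c}. \<Sum>k\<in>{- int (n 0)..1}. \<Sum>v\<in>{0,1::nat}.
        (if ?t i k v \<in> Wset c - {n} then jump_rate a b cr d i k (n i) v else 0))) (Wset c - {n})"
    unfolding Q_def qW_def of_nat_1 by (intro has_sum_sum has_sum_point_mass) auto
  also have "(\<Sum>i\<in>{1..c}. \<Sum>k\<in>{- int (n 0)..1}. \<Sum>v\<in>{0,1::nat}.
        (if ?t i k v \<in> Wset c - {n} then jump_rate a b cr d i k (n i) v else 0))
     = (\<Sum>i\<in>{1..c}. \<Sum>k\<in>{- int (n 0)..1}. jump_total i k (n i) - (if k = 0 then self_rate i (n i) else 0))"
  proof (intro sum.cong refl)
    fix i k assume i: "i \<in> {1..c}" and k: "k \<in> {- int (n 0)..1}"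
    have "n i \<le> 1" using Wset_le_1[OF n i] .
    then show "(\<Sum>v\<in>{0,1::nat}. (if ?t i k v \<in> Wset c - {n} then jump_rate a b cr d i k (n i) v else 0))
          = jump_total i k (n i) - (if k = 0 then self_rate i (n i) else 0)"
      using jump_target_eq_iff[OF i, of n k] Wset_update[OF n i] k
      by (cases "n i = 0") (auto simp: jump_rate_def jump_total_def self_rate_def)
  qed
  also have "\<dots> = departure_rate n - exit_rate c a b cr d n"
  proof -
    have "departure_rate n = (\<Sum>i\<in>{1..c}. (\<Sum>j. jump_total i (- int (n 0) - 1 - int j) (n i))
        + (\<Sum>k\<in>{- int (n 0)..1}. jump_total i k (n i)) - self_rate i (n i))"
      unfolding departure_rate_def using total_rate_split Wset_le_1[OF n] by (intro sum.cong) auto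
    then show ?thesis unfolding exit_rate_eq[OF n] by (simp add: sum.distrib sum_subtractf)
  qed
  finally show ?thesis .
qed

lemma departure_rate_bounds:
  assumes "n \<in> Wset c"
  shows "0 \<le> departure_rate n" "departure_rate n \<le> (\<Sum>i\<in>{1..c}. total_rate i 0 + total_rate i 1)"
proof -
  show "0 \<le> departure_rate n"
    using has_sum_nonneg[OF Q_row_has_sum[OF assms] Q_nonneg] exit_rate_nonneg[OF assms] by simp
  show "departure_rate n \<le> (\<Sum>i\<in>{1..c}. total_rate i 0 + total_rate i 1)"
    unfolding departure_rate_def
  proof (rule sum_mono)
    fix i assume i: "i \<in> {1..c}"
    have "0 \<le> self_rate i (n i)" unfolding self_rate_def using rates_nonneg[OF i, of 0] by auto
    moreover have "total_rate i (n i) \<le> total_rate i 0 + total_rate i 1"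
      using total_rate_nonneg[OF i, of 0] total_rate_nonneg[OF i, of 1] Wset_le_1[OF assms i]
      by (cases "n i = 0") (auto simp: le_Suc_eq)
    ultimately show "total_rate i (n i) - self_rate i (n i) \<le> total_rate i 0 + total_rate i 1" by simp
  qed
qed


definition server_rate :: "nat \<Rightarrow> (nat \<Rightarrow> nat) \<Rightarrow> (nat \<Rightarrow> nat) \<Rightarrow> real" where
  "server_rate i m n = (\<Sum>k\<in>{- int (m 0)..1}. \<Sum>v\<in>{0,1::nat}.
     if n = m(0 := nat (int (m 0) + k), i := v) then jump_rate a b cr d i k (m i) v else 0)"

lemma Q_eq_sum_server_rate: "Q m n = (\<Sum>i\<in>{1..c}. server_rate i m n)"
  unfolding Q_def qW_def server_rate_def by simp

lemma server_rate_self: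
  assumes n: "n \<in> Wset c" and i: "i \<in> {1..c}"
  shows "server_rate i n n = self_rate i (n i)"
proof -
  have "server_rate i n n = (\<Sum>k\<in>{- int (n 0)..1}. \<Sum>v\<in>{0,1::nat}.
      if k = 0 \<and> v = n i then jump_rate a b cr d i k (n i) v else 0)"
    unfolding server_rate_def
  proof (intro sum.cong refl)
    fix k v assume "k \<in> {- int (n 0)..1}"
    then have "(n = n(0 := nat (int (n 0) + k), i := v)) \<longleftrightarrow> k = 0 \<and> v = n i"
      using jump_target_eq_iff[OF i, of n k v] by auto
    then show "(if n = n(0 := nat (int (n 0) + k), i := v) then jump_rate a b cr d i k (n i) v else 0)
      = (if k = 0 \<and> v = n i then jump_rate a b cr d i k (n i) v else 0)" by simp
  qed
  also have "\<dots> = (\<Sum>k\<in>{- int (n 0)..1}. if k = 0 then jump_rate a b cr d i k (n i) (n i) else 0)"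
    using Wset_le_1[OF n i] by (intro sum.cong refl) (auto simp: le_Suc_eq)
  also have "\<dots> = jump_rate a b cr d i 0 (n i) (n i)" by (subst sum.delta) auto
  finally show ?thesis
    using Wset_le_1[OF n i] by (auto simp: jump_rate_def self_rate_def le_Suc_eq)
qed

text \<open>The states from which a jump of server \<open>i\<close> (of displacement \<open>1 - j\<close>, ending in its current state)
  leads to \<open>n\<close>; the server was in state \<open>u\<close> before the jump.\<close>

definition pred_state :: "(nat \<Rightarrow> nat) \<Rightarrow> nat \<Rightarrow> nat \<Rightarrow> nat \<Rightarrow> (nat \<Rightarrow> nat)" where
  "pred_state n i u j = n(0 := n 0 - 1 + j, i := u)"

lemma server_rate_pred_state:
  assumes n: "n \<in> Wset c" "1 \<le> n 0" and i: "i \<in> {1..c}"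
  shows "server_rate i (pred_state n i u j) n = jump_rate a b cr d i (1 - int j) u (n i)"
proof -
  let ?m = "pred_state n i u j"
  have m0: "?m 0 = n 0 - 1 + j" and mi: "?m i = u" using i by (auto simp: pred_state_def)
  have target: "n = ?m(0 := nat (int (?m 0) + k), i := v) \<longleftrightarrow> k = 1 - int j \<and> v = n i"
    if "k \<in> {- int (?m 0)..1}" for k v
  proof
    assume eq: "n = ?m(0 := nat (int (?m 0) + k), i := v)"
    from fun_cong[OF eq, of 0] fun_cong[OF eq, of i] that n(2) i m0 show "k = 1 - int j \<and> v = n i"
      by auto
  qed (use n(2) in \<open>auto simp: pred_state_def fun_eq_iff\<close>)
  have "server_rate i ?m n = (\<Sum>k\<in>{- int (?m 0)..1}. \<Sum>v\<in>{0,1::nat}.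
      if k = 1 - int j \<and> v = n i then jump_rate a b cr d i k u v else 0)"
    unfolding server_rate_def mi by (intro sum.cong refl) (use target in auto)
  also have "\<dots> = (\<Sum>k\<in>{- int (?m 0)..1}. if k = 1 - int j then jump_rate a b cr d i k u (n i) else 0)"
    using Wset_le_1[OF n(1) i] by (intro sum.cong refl) (auto simp: le_Suc_eq)
  also have "\<dots> = jump_rate a b cr d i (1 - int j) u (n i)"
    using m0 n(2) by (subst sum.delta) auto
  finally show ?thesis .
qed

lemma server_rate_eq_0:
  assumes n: "n \<in> Wset c" "1 \<le> n 0" and i: "i \<in> {1..c}"
    and m: "m \<in> Wset c" "m \<notin> range (pred_state n i 0) \<union> range (pred_state n i 1)"
  shows "server_rate i m n = 0"
proof (rule ccontr)
  assume "server_rate i m n \<noteq> 0"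
  have "\<exists>k\<in>{- int (m 0)..1}. \<exists>v\<in>{0,1::nat}. n = m(0 := nat (int (m 0) + k), i := v)"
  proof (rule ccontr)
    assume "\<not> ?thesis"
    then have "server_rate i m n = 0" unfolding server_rate_def by (intro sum.neutral ballI) auto
    with \<open>server_rate i m n \<noteq> 0\<close> show False by simp
  qed
  then obtain k v where k: "k \<in> {- int (m 0)..1}" and eq: "n = m(0 := nat (int (m 0) + k), i := v)"
    by blast
  have "int (n 0) = int (m 0) + k" using fun_cong[OF eq, of 0] i k by auto
  then have "m 0 = n 0 - 1 + (m 0 + 1 - n 0)" using k n(2) by arith
  then have "pred_state n i (m i) (m 0 + 1 - n 0) = m"
    using fun_cong[OF eq] unfolding pred_state_def by (auto simp: fun_eq_iff)
  moreover have "m i = 0 \<or> m i = 1" using Wset_le_1[OF m(1) i] by auto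
  ultimately have "m \<in> range (pred_state n i 0) \<union> range (pred_state n i 1)"
    by (metis UnI1 UnI2 rangeI)
  with m(2) show False by blast
qed

lemma inj_pred_state: "i \<noteq> 0 \<Longrightarrow> inj (pred_state n i u)"
  by (rule injI) (auto simp: pred_state_def dest: fun_cong[where x=0])

lemma pred_state_in_Wset: "n \<in> Wset c \<Longrightarrow> i \<in> {1..c} \<Longrightarrow> u \<le> 1 \<Longrightarrow> pred_state n i u j \<in> Wset c"
  unfolding pred_state_def by (rule Wset_update)

lemma pred_state_lines_disjoint: "range (pred_state n i 0) \<inter> range (pred_state n i 1) = {}"
proof (intro equals0I)
  fix m assume "m \<in> range (pred_state n i 0) \<inter> range (pred_state n i 1)"
  then obtain j j' where "m = pred_state n i 0 j" "m = pred_state n i 1 j'" by blast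
  then have "m i = pred_state n i 0 j i" "m i = pred_state n i 1 j' i" by simp_all
  then show False by (simp add: pred_state_def)
qed

lemma geometric_weight_pred_state:
  assumes "1 \<le> n 0" and "i \<in> {1..c}"
  shows "z ^ pred_state n i u j 0 * (\<Prod>i'\<in>{1..c}. \<beta> i' ^ pred_state n i u j i')
    = z ^ (n 0 - 1) * \<beta> i ^ u * (\<Prod>i'\<in>{1..c}-{i}. \<beta> i' ^ n i') * z ^ j"
proof -
  let ?m = "pred_state n i u j"
  have "(\<Prod>i'\<in>{1..c}. \<beta> i' ^ ?m i') = \<beta> i ^ ?m i * (\<Prod>i'\<in>{1..c}-{i}. \<beta> i' ^ ?m i')"
    using assms(2) by (subst prod.remove) auto
  also have "(\<Prod>i'\<in>{1..c}-{i}. \<beta> i' ^ ?m i') = (\<Prod>i'\<in>{1..c}-{i}. \<beta> i' ^ n i')"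
    unfolding pred_state_def by (intro prod.cong) auto
  moreover obtain N where "n 0 = Suc N" using assms(1) by (cases "n 0") auto
  ultimately show ?thesis using assms(2) by (simp add: pred_state_def power_add mult_ac)
qed

lemma server_inflow_line_has_sum:
  fixes z :: real and \<beta> :: "nat \<Rightarrow> real"
  assumes n: "n \<in> Wset c" "1 \<le> n 0" and i: "i \<in> {1..c}" and z: "0 \<le> z" "z \<le> 1"
  shows "((\<lambda>m. (z ^ m 0 * (\<Prod>i'\<in>{1..c}. \<beta> i' ^ m i')) * server_rate i m n)
     has_sum (z ^ (n 0 - 1) * \<beta> i ^ u * (\<Prod>i'\<in>{1..c}-{i}. \<beta> i' ^ n i')
              * genf 1 (\<lambda>k l. jump_rate a b cr d l k u (n i)) i z)) (range (pred_state n i u))"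
proof -
  have "((\<lambda>j. z ^ (n 0 - 1) * \<beta> i ^ u * (\<Prod>i'\<in>{1..c}-{i}. \<beta> i' ^ n i')
      * (jump_rate a b cr d i (int 1 - int j) u (n i) * z ^ j))
     has_sum (z ^ (n 0 - 1) * \<beta> i ^ u * (\<Prod>i'\<in>{1..c}-{i}. \<beta> i' ^ n i')
              * genf 1 (\<lambda>k l. jump_rate a b cr d l k u (n i)) i z)) UNIV"
    by (intro has_sum_cmult_right genf_has_sum z)
      (use jump_rate_nonneg[OF i] jump_rate_summable[OF i] in simp_all)
  then have "(((\<lambda>m. (z ^ m 0 * (\<Prod>i'\<in>{1..c}. \<beta> i' ^ m i')) * server_rate i m n) \<circ> pred_state n i u)
     has_sum (z ^ (n 0 - 1) * \<beta> i ^ u * (\<Prod>i'\<in>{1..c}-{i}. \<beta> i' ^ n i')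
              * genf 1 (\<lambda>k l. jump_rate a b cr d l k u (n i)) i z)) UNIV"
    by (rule has_sum_cong[THEN iffD1, rotated])
      (unfold comp_def geometric_weight_pred_state[where n=n and i=i, OF n(2) i]
        server_rate_pred_state[OF n i], simp add: algebra_simps)
  moreover have "i \<noteq> 0" using i by simp
  ultimately show ?thesis by (subst has_sum_reindex[OF inj_pred_state])
qed

lemma server_inflow_has_sum:
  fixes z :: real and \<beta> :: "nat \<Rightarrow> real"
  assumes n: "n \<in> Wset c" "1 \<le> n 0" and i: "i \<in> {1..c}" and z: "0 \<le> z" "z \<le> 1"
  shows "((\<lambda>m. (z ^ m 0 * (\<Prod>i'\<in>{1..c}. \<beta> i' ^ m i')) * server_rate i m n)
     has_sum ((\<Prod>i'\<in>{1..c}-{i}. \<beta> i' ^ n i') * z ^ (n 0 - 1) *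
       (if n i = 0 then genf 1 b i z + \<beta> i * genf 1 d i z else genf 1 a i z + \<beta> i * genf 1 cr i z)))
     (Wset c)"
proof -
  let ?f = "\<lambda>m. (z ^ m 0 * (\<Prod>i'\<in>{1..c}. \<beta> i' ^ m i')) * server_rate i m n"
  let ?S = "\<lambda>u. z ^ (n 0 - 1) * \<beta> i ^ u * (\<Prod>i'\<in>{1..c}-{i}. \<beta> i' ^ n i')
              * genf 1 (\<lambda>k l. jump_rate a b cr d l k u (n i)) i z"
  have "(?f has_sum ?S 0 + ?S 1) (range (pred_state n i 0) \<union> range (pred_state n i 1))"
    by (rule has_sum_Un_disjoint[OF server_inflow_line_has_sum[OF n i z] server_inflow_line_has_sum[OF n i z]
          pred_state_lines_disjoint])
  then have "(?f has_sum ?S 0 + ?S 1) (Wset c)"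
  proof (rule has_sum_cong_neutral[THEN iffD1, rotated -1])
    fix m assume "m \<in> Wset c - (range (pred_state n i 0) \<union> range (pred_state n i 1))"
    then show "?f m = 0" using server_rate_eq_0[OF n i, of m] by simp
  qed (use pred_state_in_Wset[OF n(1) i] in auto)
  moreover have "n i = 0 \<or> n i = 1" using Wset_le_1[OF n(1) i] by auto
  then have "?S 0 + ?S 1 = (\<Prod>i'\<in>{1..c}-{i}. \<beta> i' ^ n i') * z ^ (n 0 - 1) *
      (if n i = 0 then genf 1 b i z + \<beta> i * genf 1 d i z else genf 1 a i z + \<beta> i * genf 1 cr i z)"
    unfolding genf_jump_rate by (elim disjE) (simp_all add: algebra_simps)
  ultimately show ?thesis by simp
qed

lemma state_space_minus_Inr:
  "n \<in> Wset c \<Longrightarrow> state_space V c - {Inr n} = Inl ` V \<union> Inr ` (Wset c - {n})"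
  unfolding state_space_def by auto

lemma equilibrium_summable_W:
  assumes "equilibrium_dist (state_space V c) q p"
  shows "(\<lambda>m. p (Inr m)) summable_on Wset c"
proof -
  have "(p has_sum 1) (state_space V c)" using assms unfolding equilibrium_dist_def by blast
  then have "p summable_on Inr ` Wset c"
    by (rule summable_on_subset[OF has_sum_imp_summable]) (auto simp: state_space_def)
  then show ?thesis by (subst (asm) summable_on_reindex) (auto simp: o_def)
qed

text \<open>Since no transition from \<open>V\<close> reaches a state with \<open>n 0 \<ge> 1\<close>, the global balance equations at
  these states only involve \<open>W\<close>.\<close>

lemma equilibrium_balance_W:
  assumes eq: "equilibrium_dist (state_space V c) q p" and n: "n \<in> Wset c" "1 \<le> n 0"
  shows "((\<lambda>m. p (Inr m) * Q m n) has_sum p (Inr n) * departure_rate n) (Wset c - {n})"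
proof -
  have s: "Inr n \<in> state_space V c" using n unfolding state_space_def by auto
  have "q (Inr n) summable_on (state_space V c - {Inr n})"
    and "(\<lambda>t. p t * q t (Inr n)) summable_on (state_space V c - {Inr n})"
    and "p (Inr n) * (\<Sum>\<^sub>\<infinity>t\<in>state_space V c - {Inr n}. q (Inr n) t)
       = (\<Sum>\<^sub>\<infinity>t\<in>state_space V c - {Inr n}. p t * q t (Inr n))"
    using eq s unfolding equilibrium_dist_def by blast+
  then have out_summable: "q (Inr n) summable_on (Inl ` V \<union> Inr ` (Wset c - {n}))"
    and in_summable: "(\<lambda>t. p t * q t (Inr n)) summable_on (Inl ` V \<union> Inr ` (Wset c - {n}))"
    and balance: "p (Inr n) * (\<Sum>\<^sub>\<infinity>t\<in>Inl ` V \<union> Inr ` (Wset c - {n}). q (Inr n) t)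
       = (\<Sum>\<^sub>\<infinity>t\<in>Inl ` V \<union> Inr ` (Wset c - {n}). p t * q t (Inr n))"
    unfolding state_space_minus_Inr[OF n(1)] .
  have "(\<Sum>\<^sub>\<infinity>t\<in>Inl ` V \<union> Inr ` (Wset c - {n}). q (Inr n) t)
      = exit_rate c a b cr d n + (\<Sum>\<^sub>\<infinity>m\<in>Wset c - {n}. Q n m)"
  proof -
    have "(\<Sum>\<^sub>\<infinity>m\<in>Wset c - {n}. q (Inr n) (Inr m)) = (\<Sum>\<^sub>\<infinity>m\<in>Wset c - {n}. Q n m)"
      by (rule infsum_cong) (use q_Inr_Inr[OF n(1)] in auto)
    then show ?thesis unfolding infsum_Inl_Inr(2)[OF finite_V out_summable] q_exit[OF n(1)] by simp
  qed
  also have "\<dots> = departure_rate n"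
    using infsumI[OF Q_row_has_sum[OF n(1)]] by simp
  finally have out: "(\<Sum>\<^sub>\<infinity>t\<in>Inl ` V \<union> Inr ` (Wset c - {n}). q (Inr n) t) = departure_rate n" .
  have Q_eq: "p (Inr m) * q (Inr m) (Inr n) = p (Inr m) * Q m n" if "m \<in> Wset c - {n}" for m
    using q_Inr_Inr[of m n] that n(1) by (simp add: eq_commute)
  have "(\<Sum>\<^sub>\<infinity>t\<in>Inl ` V \<union> Inr ` (Wset c - {n}). p t * q t (Inr n))
      = (\<Sum>\<^sub>\<infinity>m\<in>Wset c - {n}. p (Inr m) * Q m n)"
  proof -
    have "(\<Sum>\<^sub>\<infinity>m\<in>Wset c - {n}. p (Inr m) * q (Inr m) (Inr n)) = (\<Sum>\<^sub>\<infinity>m\<in>Wset c - {n}. p (Inr m) * Q m n)"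
      by (rule infsum_cong) (rule Q_eq)
    then show ?thesis unfolding infsum_Inl_Inr(2)[OF finite_V in_summable] by (simp add: q_Inl_Inr[OF _ n])
  qed
  moreover have "(\<lambda>m. p (Inr m) * Q m n) summable_on (Wset c - {n})"
    using infsum_Inl_Inr(1)[OF finite_V in_summable]
    by (rule summable_on_cong[THEN iffD1, rotated]) (rule Q_eq)
  ultimately show ?thesis
    unfolding has_sum_iff using balance[unfolded out] by argo
qed

subsection \<open>Solutions of the balance equations vanishing on the boundary\<close>

context
  fixes e :: "(nat \<Rightarrow> nat) \<Rightarrow> real"
  assumes e_summable: "e summable_on Wset c"
    and e_boundary: "\<And>n. n \<in> boundary_states c \<Longrightarrow> e n = 0"
    and e_balance: "\<And>n. n \<in> Wset c \<Longrightarrow> 1 \<le> n 0 \<Longrightarrow>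
       ((\<lambda>m. e m * Q m n) has_sum e n * departure_rate n) (Wset c - {n})"
begin

lemma abs_balance_tight:
  shows "\<And>m. m \<in> Wset c \<Longrightarrow> 1 \<le> m 0 \<Longrightarrow> e m \<noteq> 0 \<Longrightarrow>
           (\<Sum>\<^sub>\<infinity>n\<in>{n \<in> Wset c. 1 \<le> n 0} - {m}. Q m n) = departure_rate m"
    and "\<And>n. n \<in> Wset c \<Longrightarrow> 1 \<le> n 0 \<Longrightarrow>
           (\<Sum>\<^sub>\<infinity>m\<in>Wset c - {n}. \<bar>e m\<bar> * Q m n) = \<bar>e n\<bar> * departure_rate n"
proof -
  have abs_inflow: "((\<lambda>m. \<bar>e m\<bar> * Q m n) has_sum (\<Sum>\<^sub>\<infinity>m\<in>Wset c - {n}. \<bar>e m\<bar> * Q m n)) (Wset c - {n})"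
    if "n \<in> {n \<in> Wset c. 1 \<le> n 0}" for n
  proof -
    have "(\<lambda>m. \<bar>e m * Q m n\<bar>) summable_on (Wset c - {n})"
      using has_sum_imp_summable[OF e_balance, of n] that
        summable_on_iff_abs_summable_on_real[of "\<lambda>m. e m * Q m n"] by simp
    then show ?thesis by (simp add: abs_mult Q_nonneg has_sum_infsum)
  qed
  have abs_inflow_ge: "\<bar>e n\<bar> * departure_rate n \<le> (\<Sum>\<^sub>\<infinity>m\<in>Wset c - {n}. \<bar>e m\<bar> * Q m n)"
    if "n \<in> {n \<in> Wset c. 1 \<le> n 0}" for n
  proof -
    have n: "n \<in> Wset c" "1 \<le> n 0" using that by auto
    have "norm (e n * departure_rate n) \<le> (\<Sum>\<^sub>\<infinity>m\<in>Wset c - {n}. \<bar>e m\<bar> * Q m n)"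
      by (rule norm_infsum_le[OF e_balance[OF n] abs_inflow[OF that]]) (simp add: abs_mult Q_nonneg)
    then show ?thesis using departure_rate_bounds(1)[OF n(1)] by (simp add: abs_mult)
  qed
  have outside: "\<bar>e m\<bar> = 0" if "m \<in> Wset c - {n \<in> Wset c. 1 \<le> n 0}" for m
    using e_boundary[of m] that unfolding boundary_states_def by auto
  have Q_out: "(\<Sum>\<^sub>\<infinity>n\<in>Wset c - {m}. Q m n) \<le> departure_rate m" if "m \<in> Wset c" for m
    using infsumI[OF Q_row_has_sum[OF that]] exit_rate_nonneg[OF that] by simp
  have abs_e_summable: "(\<lambda>m. \<bar>e m\<bar>) summable_on Wset c"
    using e_summable summable_on_iff_abs_summable_on_real[of e] by simp
  note conservation = mass_conservation[where S="{n \<in> Wset c. 1 \<le> n 0}" and W="Wset c"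
      and u="\<lambda>m. \<bar>e m\<bar>" and Q=Q and out=departure_rate,
      OF _ abs_e_summable _ outside Q_nonneg
      has_sum_imp_summable[OF Q_row_has_sum] Q_out departure_rate_bounds(2)
      has_sum_imp_summable[OF abs_inflow] abs_inflow_ge]
  show "(\<Sum>\<^sub>\<infinity>n\<in>{n \<in> Wset c. 1 \<le> n 0} - {m}. Q m n) = departure_rate m"
    if "m \<in> Wset c" "1 \<le> m 0" "e m \<noteq> 0" for m
    using conservation(1)[of m] that by auto
  show "(\<Sum>\<^sub>\<infinity>m\<in>Wset c - {n}. \<bar>e m\<bar> * Q m n) = \<bar>e n\<bar> * departure_rate n"
    if "n \<in> Wset c" "1 \<le> n 0" for n
    using conservation(2)[of n] that by auto
qed

lemma no_escape_from_support:
  assumes m: "m \<in> Wset c" "1 \<le> m 0" "e m \<noteq> 0"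
  shows "exit_rate c a b cr d m = 0" and "\<And>n. n \<in> Wset c \<Longrightarrow> n 0 = 0 \<Longrightarrow> Q m n = 0"
proof -
  define S where "S = {n \<in> Wset c. 1 \<le> n 0}"
  have summable: "Q m summable_on (Wset c - {m})"
    by (rule has_sum_imp_summable[OF Q_row_has_sum[OF m(1)]])
  have "departure_rate m - exit_rate c a b cr d m = (\<Sum>\<^sub>\<infinity>n\<in>Wset c - {m}. Q m n)"
    using infsumI[OF Q_row_has_sum[OF m(1)]] by simp
  also have "Wset c - {m} = (S - {m}) \<union> (Wset c - S - {m})" unfolding S_def by auto
  also have "(\<Sum>\<^sub>\<infinity>n\<in>(S - {m}) \<union> (Wset c - S - {m}). Q m n)
      = (\<Sum>\<^sub>\<infinity>n\<in>S - {m}. Q m n) + (\<Sum>\<^sub>\<infinity>n\<in>Wset c - S - {m}. Q m n)"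
    by (rule infsum_Un_disjoint[OF summable_on_subset[OF summable] summable_on_subset[OF summable]])
      (auto simp: S_def)
  also have "(\<Sum>\<^sub>\<infinity>n\<in>S - {m}. Q m n) = departure_rate m"
    unfolding S_def by (rule abs_balance_tight(1)[OF m])
  finally have sum_0: "exit_rate c a b cr d m + (\<Sum>\<^sub>\<infinity>n\<in>Wset c - S - {m}. Q m n) = 0" by simp
  moreover have "0 \<le> (\<Sum>\<^sub>\<infinity>n\<in>Wset c - S - {m}. Q m n)" by (rule infsum_nonneg) (rule Q_nonneg)
  ultimately show exit_0: "exit_rate c a b cr d m = 0" using exit_rate_nonneg[OF m(1)] by simp
  have summable_rest: "Q m summable_on (Wset c - S - {m})" by (rule summable_on_subset[OF summable]) auto
  show "Q m n = 0" if "n \<in> Wset c" "n 0 = 0" for n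
    using nonneg_infsum_le_0D[OF _ summable_rest Q_nonneg, of n] sum_0 exit_0 that m(2)
    by (auto simp: S_def)
qed

lemma no_inflow_to_zero:
  assumes n: "n \<in> Wset c" "1 \<le> n 0" "e n = 0" and m: "m \<in> Wset c" "m \<noteq> n"
  shows "e m = 0 \<or> Q m n = 0"
proof -
  have "(\<lambda>m. \<bar>e m * Q m n\<bar>) summable_on (Wset c - {n})"
    using has_sum_imp_summable[OF e_balance[OF n(1,2)]]
      summable_on_iff_abs_summable_on_real[of "\<lambda>m. e m * Q m n"] by simp
  then have summable: "(\<lambda>m. \<bar>e m\<bar> * Q m n) summable_on (Wset c - {n})" by (simp add: abs_mult Q_nonneg)
  have "\<bar>e m\<bar> * Q m n = 0"
    by (rule nonneg_infsum_le_0D[where f="\<lambda>m. \<bar>e m\<bar> * Q m n" and A="Wset c - {n}", OF _ summable])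
      (use abs_balance_tight(2)[OF n(1,2)] n(3) m Q_nonneg in auto)
  then show ?thesis by simp
qed

lemma support_closed:
  assumes m: "m \<in> Wset c" "e m \<noteq> 0"
    and t: "t \<in> state_space V c" "Inr m \<noteq> t" "0 < q (Inr m) t"
  shows "\<exists>n. t = Inr n \<and> e n \<noteq> 0"
proof -
  have "m 0 \<noteq> 0" using m e_boundary[of m] by (auto simp: boundary_states_def)
  then have m0: "1 \<le> m 0" by simp
  show ?thesis
  proof (cases t)
    case (Inl v)
    then have v: "v \<in> V" using t(1) by (auto simp: state_space_def)
    have "q (Inr m) (Inl v') \<ge> 0" if "v' \<in> V" for v'
      using q_nonneg[of "Inr m" "Inl v'"] m(1) that by (simp add: state_space_def)
    then have "q (Inr m) (Inl v) \<le> (\<Sum>v'\<in>V. q (Inr m) (Inl v'))"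
      using v finite_V by (intro member_le_sum) auto
    then show ?thesis using t(3) Inl q_exit[OF m(1)] no_escape_from_support(1)[OF m(1) m0 m(2)] by simp
  next
    case (Inr n)
    then have n: "n \<in> Wset c" "n \<noteq> m" using t(1,2) by (auto simp: state_space_def)
    have "q (Inr m) (Inr n) = Q m n" using q_Inr_Inr[OF m(1) n(1)] n(2) by metis
    then have Q_pos: "0 < Q m n" using t(3) Inr by simp
    then have "n 0 \<noteq> 0" using no_escape_from_support(2)[OF m(1) m0 m(2) n(1)] by auto
    then have "e n \<noteq> 0" using no_inflow_to_zero[OF n(1), of m] m n(2) Q_pos by auto
    then show ?thesis using Inr by blast
  qed
qed

text \<open>By irreducibility every state of \<open>W\<close> reaches the empty state, which lies on the boundary;
  so the support of \<open>e\<close>, being closed under transitions, is empty.\<close>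

lemma balance_solution_zero:
  assumes n: "n \<in> Wset c"
  shows "e n = 0"
proof (rule ccontr)
  assume "e n \<noteq> 0"
  define empty :: "nat \<Rightarrow> nat" where "empty = (\<lambda>_. 0)"
  have empty: "empty \<in> Wset c" "empty \<in> boundary_states c"
    unfolding empty_def boundary_states_def Wset_def by auto
  let ?step = "\<lambda>s t. s \<in> state_space V c \<and> t \<in> state_space V c \<and> s \<noteq> t \<and> 0 < q s t"
  have support: "\<exists>m. t = Inr m \<and> e m \<noteq> 0" if "?step\<^sup>*\<^sup>* (Inr n) t" for t
    using that
  proof (induction rule: rtranclp_induct)
    case base
    then show ?case using \<open>e n \<noteq> 0\<close> by blast
  next
    case (step s t)
    then obtain m where m: "s = Inr m" "e m \<noteq> 0" by blast
    moreover have "m \<in> Wset c" using step.hyps(2) m(1) by (auto simp: state_space_def)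
    ultimately show ?case using support_closed[of m t] step.hyps(2) by blast
  qed
  have "?step\<^sup>*\<^sup>* (Inr n) (Inr empty)"
    using q_irreducible[unfolded irreducible_ctmc_def] n empty(1) by (simp add: state_space_def)
  then have "e empty \<noteq> 0" using support by blast
  then show False using e_boundary[OF empty(2)] by simp
qed

end

end

section \<open>Product-form solutions\<close>

locale product_form_model = queue_model +
  fixes beta0 :: "(nat \<Rightarrow> real) \<Rightarrow> real"
  assumes roots: "\<forall>x\<in>sign_vectors c. 0 < beta0 x \<and> beta0 x < 1 \<and> Efun 1 c a b cr d x (beta0 x) = 0"
begin

definition beta :: "(nat \<Rightarrow> real) \<Rightarrow> nat \<Rightarrow> real" where
  "beta x i = (Ffun 1 a b cr d i (beta0 x) + x i * Rfun 1 a b cr d i (beta0 x)) / (2 * genf 1 d i (beta0 x))"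

definition prod_form :: "(nat \<Rightarrow> real) \<Rightarrow> (nat \<Rightarrow> nat) \<Rightarrow> real" where
  "prod_form x n = beta0 x ^ n 0 * (\<Prod>i\<in>{1..c}. beta x i ^ n i)"

text \<open>The defect of coordinate \<open>i\<close> in the balance equations for \<open>prod_form x\<close>; the defects sum to
  zero precisely because \<open>beta0 x\<close> solves (E_x).\<close>

definition balance_defect :: "(nat \<Rightarrow> real) \<Rightarrow> nat \<Rightarrow> real" where
  "balance_defect x i = beta0 x * total_rate i 0 - genf 1 b i (beta0 x) - beta x i * genf 1 d i (beta0 x)"

lemma beta0_bounds: "x \<in> sign_vectors c \<Longrightarrow> 0 < beta0 x \<and> beta0 x < 1"
  using roots by auto

lemma beta_quadratic:
  assumes x: "x \<in> sign_vectors c" and i: "i \<in> {1..c}"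
  shows "genf 1 d i (beta0 x) * (beta x i)\<^sup>2 - Ffun 1 a b cr d i (beta0 x) * beta x i - genf 1 a i (beta0 x) = 0"
  using beta0_bounds[OF x] genf_a_d_pos[OF i] genf_rates_nonneg[OF i] sign_vector_values[OF x i]
  by (intro quadratic_root[where s="x i"]) (auto simp: beta_def Rfun_def)

lemma balance_defect_sum: "x \<in> sign_vectors c \<Longrightarrow> (\<Sum>i\<in>{1..c}. balance_defect x i) = 0"
proof -
  assume x: "x \<in> sign_vectors c"
  have "2 * balance_defect x i = - (x i * Rfun 1 a b cr d i (beta0 x) + genf 1 b i (beta0 x)
      + genf 1 cr i (beta0 x) - beta0 x ^ 1 * (genf 1 a i 1 + genf 1 b i 1 + genf 1 cr i 1 + genf 1 d i 1))"
    if i: "i \<in> {1..c}" for i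
  proof -
    have "0 < genf 1 d i (beta0 x)" using genf_a_d_pos[OF i] beta0_bounds[OF x] by simp
    then have "beta x i * genf 1 d i (beta0 x)
        = (Ffun 1 a b cr d i (beta0 x) + x i * Rfun 1 a b cr d i (beta0 x)) / 2"
      unfolding beta_def by (simp add: field_simps)
    then show ?thesis unfolding balance_defect_def total_rate_def Ffun_def by (simp add: algebra_simps)
  qed
  then have "2 * (\<Sum>i\<in>{1..c}. balance_defect x i) = - Efun 1 c a b cr d x (beta0 x)"
    unfolding Efun_def sum_distrib_left by (simp add: sum_negf[symmetric])
  then show ?thesis using roots x by simp
qed

lemma server_inflow_factor:
  assumes x: "x \<in> sign_vectors c" and i: "i \<in> {1..c}" and u: "u \<le> 1"
  shows "(if u = 0 then genf 1 b i (beta0 x) + beta x i * genf 1 d i (beta0 x)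
          else genf 1 a i (beta0 x) + beta x i * genf 1 cr i (beta0 x))
     = beta x i ^ u * (beta0 x * total_rate i u - balance_defect x i)"
proof (cases "u = 0")
  case True
  then show ?thesis unfolding balance_defect_def by simp
next
  case False
  then have "u = 1" using u by simp
  then show ?thesis
    using beta_quadratic[OF x i]
    unfolding balance_defect_def total_rate_def Ffun_def by (simp add: algebra_simps power2_eq_square)
qed

lemma prod_form_balance:
  assumes x: "x \<in> sign_vectors c" and n: "n \<in> Wset c" "1 \<le> n 0"
  shows "((\<lambda>m. prod_form x m * Q m n) has_sum prod_form x n * departure_rate n) (Wset c - {n})"
proof -
  define z where "z = beta0 x"
  have z: "0 \<le> z" "z \<le> 1" using beta0_bounds[OF x] unfolding z_def by auto
  define P where "P = (\<Prod>i\<in>{1..c}. beta x i ^ n i)"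
  have inflow_i: "((\<lambda>m. prod_form x m * server_rate i m n) has_sum
      (prod_form x n * total_rate i (n i) - P * z ^ (n 0 - 1) * balance_defect x i)) (Wset c)"
    if i: "i \<in> {1..c}" for i
  proof -
    have "P = beta x i ^ n i * (\<Prod>i'\<in>{1..c}-{i}. beta x i' ^ n i')"
      unfolding P_def using i by (subst prod.remove) auto
    moreover have "prod_form x n = z * z ^ (n 0 - 1) * P"
      using n(2) unfolding prod_form_def P_def z_def by (cases "n 0") auto
    ultimately show ?thesis
      using server_inflow_has_sum[OF n i z, of "beta x"] server_inflow_factor[OF x i Wset_le_1[OF n(1) i]]
      unfolding prod_form_def z_def by (simp add: algebra_simps)
  qed
  have "((\<lambda>m. prod_form x m * Q m n) has_sum
      (\<Sum>i\<in>{1..c}. prod_form x n * total_rate i (n i) - P * z ^ (n 0 - 1) * balance_defect x i)) (Wset c)"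
    unfolding Q_eq_sum_server_rate sum_distrib_left by (intro has_sum_sum inflow_i) auto
  also have "(\<Sum>i\<in>{1..c}. prod_form x n * total_rate i (n i) - P * z ^ (n 0 - 1) * balance_defect x i)
      = prod_form x n * (\<Sum>i\<in>{1..c}. total_rate i (n i))"
    using balance_defect_sum[OF x]
    by (simp add: sum_subtractf sum_distrib_left[symmetric] flip: sum_distrib_left)
  finally have "((\<lambda>m. prod_form x m * Q m n) has_sum
      prod_form x n * (\<Sum>i\<in>{1..c}. total_rate i (n i)) - prod_form x n * Q n n) (Wset c - {n})"
    using n(1) by (rule has_sum_remove)
  moreover have "Q n n = (\<Sum>i\<in>{1..c}. self_rate i (n i))"
    unfolding Q_eq_sum_server_rate using server_rate_self[OF n(1)] by simp
  ultimately show ?thesis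
    unfolding departure_rate_def by (simp add: sum_subtractf right_diff_distrib)
qed

lemma prod_form_level: "prod_form x (ph(0 := l)) = beta0 x ^ l * (\<Prod>i\<in>{1..c}. beta x i ^ ph i)"
proof -
  have "(\<Prod>i\<in>{1..c}. beta x i ^ (ph(0 := l)) i) = (\<Prod>i\<in>{1..c}. beta x i ^ ph i)"
    by (rule prod.cong) auto
  then show ?thesis unfolding prod_form_def by simp
qed

lemma prod_form_summable:
  assumes x: "x \<in> sign_vectors c"
  shows "prod_form x summable_on Wset c"
  unfolding Wset_eq_UN_levels
proof (rule summable_on_finite_union_disjoint[OF finite_boundary_states])
  fix ph
  have "(\<lambda>l. (\<Prod>i\<in>{1..c}. beta x i ^ ph i) * beta0 x ^ l) summable_on UNIV"
    using beta0_bounds[OF x]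
    by (intro summable_on_cmult_right summable_nonneg_imp_summable_on summable_geometric) auto
  moreover have "inj (\<lambda>l. ph(0 := l))" by (auto simp: inj_def dest: fun_cong[where x=0])
  ultimately show "prod_form x summable_on range (\<lambda>l. ph(0 := l))"
    by (subst summable_on_reindex) (auto simp: o_def prod_form_level mult.commute)
next
  fix ph ph' assume "ph \<in> boundary_states c" "ph' \<in> boundary_states c" "ph \<noteq> ph'"
  from this(1,2) have "ph 0 = 0" "ph' 0 = 0" unfolding boundary_states_def by auto
  show "range (\<lambda>l. ph(0 := l)) \<inter> range (\<lambda>l. ph'(0 := l)) = {}"
  proof (intro equals0I)
    fix m assume "m \<in> range (\<lambda>l. ph(0 := l)) \<inter> range (\<lambda>l. ph'(0 := l))"
    then obtain l l' where "m = ph(0 := l)" "m = ph'(0 := l')" by blast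
    have "ph = m(0 := 0)" using \<open>m = ph(0 := l)\<close> \<open>ph 0 = 0\<close> by (auto simp: fun_eq_iff)
    moreover have "ph' = m(0 := 0)" using \<open>m = ph'(0 := l')\<close> \<open>ph' 0 = 0\<close> by (auto simp: fun_eq_iff)
    ultimately show False using \<open>ph \<noteq> ph'\<close> by simp
  qed
qed


lemma combination_has_sum:
  "((\<lambda>m. \<Sum>x\<in>sign_vectors c. \<alpha> x * prod_form x m) has_sum
     (\<Sum>x\<in>sign_vectors c. \<alpha> x * infsum (prod_form x) (Wset c))) (Wset c)"
  by (intro has_sum_sum finite_sign_vectors has_sum_cmult_right has_sum_infsum prod_form_summable)

lemma combination_balance:
  assumes n: "n \<in> Wset c" "1 \<le> n 0"
  shows "((\<lambda>m. (\<Sum>x\<in>sign_vectors c. \<alpha> x * prod_form x m) * Q m n) has_sum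
     (\<Sum>x\<in>sign_vectors c. \<alpha> x * prod_form x n) * departure_rate n) (Wset c - {n})"
proof -
  have "((\<lambda>m. \<Sum>x\<in>sign_vectors c. \<alpha> x * (prod_form x m * Q m n)) has_sum
      (\<Sum>x\<in>sign_vectors c. \<alpha> x * (prod_form x n * departure_rate n))) (Wset c - {n})"
    by (intro has_sum_sum finite_sign_vectors has_sum_cmult_right prod_form_balance n)
  then show ?thesis by (simp add: sum_distrib_right mult.assoc)
qed

text \<open>The \<open>beta0 x\<close> need not be distinct: the level \<open>n 0\<close> separates the fibres of \<open>beta0\<close>, and within
  a fibre the boundary states separate the sign vectors.\<close>

lemma prod_forms_independent:
  assumes vanish: "\<forall>ph\<in>boundary_states c. (\<Sum>x\<in>sign_vectors c. \<alpha> x * prod_form x ph) = 0"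
    and y: "y \<in> sign_vectors c"
  shows "\<alpha> y = 0"
proof -
  define f where "f m = (\<Sum>x\<in>sign_vectors c. \<alpha> x * prod_form x m)" for m
  have "f summable_on Wset c"
    unfolding f_def by (rule has_sum_imp_summable[OF combination_has_sum])
  moreover have "f n = 0" if "n \<in> boundary_states c" for n
    using vanish that unfolding f_def by blast
  moreover have "((\<lambda>m. f m * Q m n) has_sum f n * departure_rate n) (Wset c - {n})"
    if "n \<in> Wset c" "1 \<le> n 0" for n
    unfolding f_def by (rule combination_balance[OF that])
  ultimately have f_0: "f n = 0" if "n \<in> Wset c" for n
    using balance_solution_zero that by blast
  define t where "t i s = (Ffun 1 a b cr d i (beta0 y) + s * Rfun 1 a b cr d i (beta0 y))
      / (2 * genf 1 d i (beta0 y))" for i s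
  define G where "G = {x \<in> sign_vectors c. beta0 x = beta0 y}"
  have distinct: "t i 1 \<noteq> t i (-1)" if i: "i \<in> {1..c}" for i
  proof -
    have D: "0 < genf 1 d i (beta0 y)" using genf_a_d_pos[OF i] beta0_bounds[OF y] by auto
    then have "t i 1 - t i (-1) = Rfun 1 a b cr d i (beta0 y) / genf 1 d i (beta0 y)"
      unfolding t_def by (simp add: field_simps)
    then show ?thesis using Rfun_pos[OF i, of "beta0 y"] beta0_bounds[OF y] D by auto
  qed
  have fibre: "(\<Sum>x\<in>G. \<alpha> x * (\<Prod>i\<in>{1..c}. t i (x i) ^ ph i)) = 0" if ph: "ph \<in> boundary_states c" for ph
  proof -
    have "(\<Sum>x\<in>sign_vectors c. (\<alpha> x * (\<Prod>i\<in>{1..c}. beta x i ^ ph i)) * beta0 x ^ l) = 0" for l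
    proof -
      have "ph(0 := l) \<in> Wset c" using ph unfolding boundary_states_def Wset_def by auto
      then have "f (ph(0 := l)) = 0" by (rule f_0)
      then show ?thesis unfolding f_def prod_form_level by (simp add: mult_ac)
    qed
    then have "(\<Sum>x\<in>G. \<alpha> x * (\<Prod>i\<in>{1..c}. beta x i ^ ph i)) = 0"
      unfolding G_def by (rule fibre_sums_zero_if_power_sums_zero[OF finite_sign_vectors])
    moreover have "beta x i = t i (x i)" if "x \<in> G" for x i
      using that unfolding G_def beta_def t_def by simp
    ultimately show ?thesis by simp
  qed
  show ?thesis
    by (rule sign_monomials_independent[of c t G \<alpha> y]) (use distinct fibre y in \<open>auto simp: G_def\<close>)
qed

lemma equilibrium_prod_form_expansion:
  assumes eq: "equilibrium_dist (state_space V c) q p"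
  shows "\<exists>\<alpha>. \<forall>n\<in>Wset c. p (Inr n) = (\<Sum>x\<in>sign_vectors c. \<alpha> x * prod_form x n)"
proof -
  have "\<exists>\<alpha>. \<forall>ph\<in>boundary_states c. p (Inr ph) = (\<Sum>x\<in>sign_vectors c. \<alpha> x * prod_form x ph)"
    by (rule square_system_solvable[OF finite_sign_vectors[of c] finite_boundary_states[of c]])
      (use card_sign_vectors card_boundary_states prod_forms_independent in auto)
  then obtain \<alpha> where \<alpha>: "\<forall>ph\<in>boundary_states c. p (Inr ph) = (\<Sum>x\<in>sign_vectors c. \<alpha> x * prod_form x ph)"
    by blast
  define e where "e m = p (Inr m) - (\<Sum>x\<in>sign_vectors c. \<alpha> x * prod_form x m)" for m
  have "e summable_on Wset c"
    unfolding e_def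
    using has_sum_diff[OF has_sum_infsum[OF equilibrium_summable_W[OF eq]] combination_has_sum]
    by (rule has_sum_imp_summable)
  moreover have "e n = 0" if "n \<in> boundary_states c" for n
    using \<alpha> that unfolding e_def by simp
  moreover have "((\<lambda>m. e m * Q m n) has_sum e n * departure_rate n) (Wset c - {n})"
    if "n \<in> Wset c" "1 \<le> n 0" for n
    using has_sum_diff[OF equilibrium_balance_W[OF eq that] combination_balance[OF that]]
    unfolding e_def by (simp add: left_diff_distrib)
  ultimately have "e n = 0" if "n \<in> Wset c" for n
    using balance_solution_zero that by blast
  then show ?thesis unfolding e_def by auto
qed

end

theorem theorem1:
  fixes c :: nat and V :: "'v set"
    and a b cr d :: "int \<Rightarrow> nat \<Rightarrow> real"
    and q :: "'v + (nat \<Rightarrow> nat) \<Rightarrow> 'v + (nat \<Rightarrow> nat) \<Rightarrow> real"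
    and p :: "'v + (nat \<Rightarrow> nat) \<Rightarrow> real"
    and beta0 :: "(nat \<Rightarrow> real) \<Rightarrow> real"
  assumes "c \<ge> 1"
    and "model_process 1 c V a b cr d q"
    and "assumption_A 1 c a b cr d"
    and "ergodic_cond 1 c a b cr d"
    and "equilibrium_dist (state_space V c) q p"
    and "\<forall>x\<in>sign_vectors c. 0 < beta0 x \<and> beta0 x < 1 \<and> Efun 1 c a b cr d x (beta0 x) = 0"
  shows "\<exists>\<alpha> :: (nat \<Rightarrow> real) \<Rightarrow> real. \<forall>n\<in>Wset c.
           p (Inr n) = (\<Sum>x\<in>sign_vectors c. \<alpha> x * beta0 x ^ n 0 *
              (\<Prod>i\<in>{1..c}. ((Ffun 1 a b cr d i (beta0 x) + x i * Rfun 1 a b cr d i (beta0 x))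
                               / (2 * genf 1 d i (beta0 x))) ^ n i))"
proof -
  interpret product_form_model c V a b cr d q beta0
    using assms(2,3,6) by unfold_locales
  show ?thesis
    using equilibrium_prod_form_expansion[OF assms(5)]
    unfolding prod_form_def beta_def by (simp add: mult.assoc)
qed

end
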